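(* For every $n\ge 1$ there is a bijection $\Phi:\mathfrak{S}_n\to\mathfrak{S}_n$ such that for all $\sigma\in\mathfrak{S}_n$, $$(\operatorname{ndes}\sigma,\ \operatorname{fmax}\sigma,\ (31\text{-}2)\sigma,\ (2\text{-}31)\sigma,\ \operatorname{MAD}\sigma) = (\operatorname{wex}\tau,\ \operatorname{fix}\tau,\ \operatorname{cros}\tau,\ \operatorname{nest}\tau,\ \operatorname{inv}\tau),\quad \tau=\Phi(\sigma).$$
   Context: $\mathfrak{S}_n$ is the set of permutations $\sigma=\sigma_1\cdots\sigma_n$ of $[n]$. An index $i\in[n-1]$ with $\sigma_i>\sigma_{i+1}$ makes $\sigma_i$ a descent (top); $\operatorname{des}\sigma$ is the number of such $i$, and $\operatorname{ndes}\sigma=n-\operatorname{des}\sigma$ is the number of nondescents, i.e. entries $\sigma_i$ ($i\in[n]$, including $\sigma_n$) that are not descent tops. $\sigma_i$ is a left-to-right maximum if $\sigma_i=\max\{\sigma_1,\dots,\sigma_i\}$; $\operatorname{fmax}\sigma$ is the number of nondescents $\sigma_i$ that are left-to-right maxima. $(31\text{-}2)\sigma=\#\{(i,j): i+1<j,\ \sigma_i>\sigma_j>\sigma_{i+1}\}$; $(2\text{-}31)\sigma=\#\{(i,j): j<i-1,\ \sigma_{i-1}>\sigma_j>\sigma_i\}$; $\operatorname{MAD}\sigma=\operatorname{des}\sigma+(31\text{-}2)\sigma+2(2\text{-}31)\sigma$. Also $\operatorname{wex}\tau=\#\{i:\tau_i\ge i\}$, $\operatorname{fix}\tau=\#\{i:\tau_i=i\}$,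 $\operatorname{cros}\tau=\#\{(i,j): i<j\le\tau_i<\tau_j \text{ or } \tau_i<\tau_j<i<j\}$, $\operatorname{nest}\tau=\#\{(i,j): i<j\le\tau_j<\tau_i \text{ or } \tau_j<\tau_i<i<j\}$, $\operatorname{inv}\tau=\#\{(i,j):i<j,\ \tau_i>\tau_j\}$. *)

theory Defs
  imports "HOL-Combinatorics.Permutations"
begin

definition perms :: "nat \<Rightarrow> (nat \<Rightarrow> nat) set" where
  "perms n = {s. s permutes {1..n}}"

definition des :: "nat \<Rightarrow> (nat \<Rightarrow> nat) \<Rightarrow> nat" where
  "des n s = card {i \<in> {1..<n}. s i > s (Suc i)}"

definition ndes :: "nat \<Rightarrow> (nat \<Rightarrow> nat) \<Rightarrow> nat" where
  "ndes n s = n - des n s"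

definition fmax :: "nat \<Rightarrow> (nat \<Rightarrow> nat) \<Rightarrow> nat" where
  "fmax n s = card {i \<in> {1..n}. \<not> (i < n \<and> s i > s (Suc i))
                                \<and> (\<forall>j \<in> {1..i}. s j \<le> s i)}"

definition pat31_2 :: "nat \<Rightarrow> (nat \<Rightarrow> nat) \<Rightarrow> nat" where
  "pat31_2 n s = card {(i, j). i \<in> {1..n} \<and> j \<in> {1..n} \<and> i + 1 < j
                          \<and> s i > s j \<and> s j > s (i + 1)}"

definition pat2_31 :: "nat \<Rightarrow> (nat \<Rightarrow> nat) \<Rightarrow> nat" where
  "pat2_31 n s = card {(i, j). i \<in> {1..n} \<and> j \<in> {1..n} \<and> j + 1 < i
                          \<and> s (i - 1) > s j \<and> s j > s i}"

definition MAD :: "nat \<Rightarrow> (nat \<Rightarrow> nat) \<Rightarrow> nat" where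
  "MAD n s = des n s + pat31_2 n s + 2 * pat2_31 n s"

definition wex :: "nat \<Rightarrow> (nat \<Rightarrow> nat) \<Rightarrow> nat" where
  "wex n t = card {i \<in> {1..n}. t i \<ge> i}"

definition fixcount :: "nat \<Rightarrow> (nat \<Rightarrow> nat) \<Rightarrow> nat" where
  "fixcount n t = card {i \<in> {1..n}. t i = i}"

definition cros :: "nat \<Rightarrow> (nat \<Rightarrow> nat) \<Rightarrow> nat" where
  "cros n t = card {(i, j). i \<in> {1..n} \<and> j \<in> {1..n} \<and>
      ((i < j \<and> j \<le> t i \<and> t i < t j) \<or> (t i < t j \<and> t j < i \<and> i < j))}"

definition nest :: "nat \<Rightarrow> (nat \<Rightarrow> nat) \<Rightarrow> nat" where
  "nest n t = card {(i, j). i \<in> {1..n} \<and> j \<in> {1..n} \<and>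
      ((i < j \<and> j \<le> t j \<and> t j < t i) \<or> (t j < t i \<and> t i < i \<and> i < j))}"

definition invc :: "nat \<Rightarrow> (nat \<Rightarrow> nat) \<Rightarrow> nat" where
  "invc n t = card {(i, j). i \<in> {1..n} \<and> j \<in> {1..n} \<and> i < j \<and> t i > t j}"

end

(*
  Both sides are encoded by Laguerre histories: Motzkin paths of length n from height 0 to 0
  with two kinds of level steps, each step carrying a weight bounded by the current height.
  A permutation \<sigma> is read value by value (Francon-Viennot): the value x gives a Down, Up,
  descending or ascending Level step as x is a peak, valley, double descent or double ascent,
  weighted by the number of 31-2 occurrences in which x is the 2; the height before x is the
  number of descents straddling x.  A permutation \<tau> is read position by position
  (Foata-Zeilberger): the step at t records how t compares with its image and its preimage,
  weighted by the crossings at t; the height is the number of arcs i \<mapsto> \<tau> i passing over t.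
  In both readings the five statistics become the same functions of the history, and the
  permutation can be reconstructed from its history.  As there are exactly n! histories, both
  readings are bijections onto them, and \<Phi> reads \<sigma> the first way and decodes the second way.
*)

theory Submission
  imports Defs
begin

section \<open>Laguerre histories\<close>

datatype step_kind = Up | Down | Level_des | Level_asc

definition des_kind :: "step_kind \<Rightarrow> bool" where
  "des_kind k \<longleftrightarrow> k = Down \<or> k = Level_des"

definition history_step :: "step_kind \<Rightarrow> nat \<Rightarrow> nat \<Rightarrow> nat option" where
  "history_step k w h = (case k of
       Down \<Rightarrow> if w < h then Some (h - 1) else None
     | Level_des \<Rightarrow> if w < h then Some h else None
     | Level_asc \<Rightarrow> if w \<le> h then Some h else None
     | Up \<Rightarrow> if w \<le> h then Some (Suc h) else None)"

fun walk :: "nat \<Rightarrow> (step_kind \<times> nat) list \<Rightarrow> nat option" where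
  "walk h [] = Some h"
| "walk h (s # l) = (case history_step (fst s) (snd s) h of None \<Rightarrow> None | Some h' \<Rightarrow> walk h' l)"

lemma walk_snoc:
  "walk h (l @ [s]) = (case walk h l of None \<Rightarrow> None | Some h' \<Rightarrow> history_step (fst s) (snd s) h')"
  by (induction l arbitrary: h) (auto split: option.splits)

definition histories :: "nat \<Rightarrow> nat \<Rightarrow> (step_kind \<times> nat) list set" where
  "histories k h = {l. length l = k \<and> walk 0 l = Some h}"

lemma walk_weight_bound: "walk h0 l = Some h \<Longrightarrow> \<forall>s\<in>set l. snd s \<le> h0 + length l"
proof (induction l arbitrary: h0)
  case (Cons s l)
  then obtain h' where "history_step (fst s) (snd s) h0 = Some h'" "walk h' l = Some h"
    by (auto split: option.splits)
  moreover from this(1) have "snd s \<le> h0 \<and> h' \<le> Suc h0"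
    by (auto simp: history_step_def split: step_kind.splits if_splits)
  ultimately show ?case using Cons.IH by force
qed simp

lemma finite_histories: "finite (histories k h)"
proof (rule finite_subset)
  show "histories k h \<subseteq> {l. set l \<subseteq> UNIV \<times> {..k} \<and> length l = k}"
    using walk_weight_bound unfolding histories_def by fastforce
  have "UNIV = {Up, Down, Level_des, Level_asc}"
    using step_kind.exhaust by auto
  then have "finite (UNIV :: step_kind set)"
    by (metis finite.emptyI finite_insert)
  then show "finite {l. set l \<subseteq> (UNIV :: step_kind set) \<times> {..k} \<and> length l = k}"
    by (intro finite_lists_length_eq) auto
qed

definition snoc_step :: "step_kind \<Rightarrow> (step_kind \<times> nat) list \<times> nat \<Rightarrow> (step_kind \<times> nat) list" where
  "snoc_step k lw = fst lw @ [(k, snd lw)]"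

lemma snoc_step_in_histories:
  "l \<in> histories k h' \<Longrightarrow> history_step s w h' = Some h \<Longrightarrow> snoc_step s (l, w) \<in> histories (Suc k) h"
  by (simp add: histories_def snoc_step_def walk_snoc)

lemma histories_Suc: "histories (Suc k) h =
     snoc_step Down ` (histories k (Suc h) \<times> {..<Suc h}) \<union> snoc_step Level_des ` (histories k h \<times> {..<h})
   \<union> snoc_step Level_asc ` (histories k h \<times> {..<Suc h}) \<union> snoc_step Up ` (histories k (h - 1) \<times> {..<h})"
  (is "_ = ?R")
proof
  show "histories (Suc k) h \<subseteq> ?R"
  proof
    fix l assume "l \<in> histories (Suc k) h"
    then have len: "length l = Suc k" and walk: "walk 0 l = Some h" by (auto simp: histories_def)
    obtain l' s w where l: "l = l' @ [(s, w)]"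
      using len by (metis length_Suc_conv_rev surj_pair)
    from walk l obtain h' where h': "walk 0 l' = Some h'" "history_step s w h' = Some h"
      by (auto simp: walk_snoc split: option.splits)
    have "l' \<in> histories k h'" and "l = snoc_step s (l', w)"
      using h' len l by (auto simp: histories_def snoc_step_def)
    with h'(2) show "l \<in> ?R"
      by (cases s) (auto simp: history_step_def split: if_splits)
  qed
  show "?R \<subseteq> histories (Suc k) h"
    by (auto intro!: snoc_step_in_histories simp: history_step_def)
qed

lemma card_snoc_step: "card (snoc_step s ` (histories k h \<times> {..<m})) = card (histories k h) * m"
proof -
  have "inj_on (snoc_step s) (histories k h \<times> {..<m})"
    by (auto simp: inj_on_def snoc_step_def)
  then show ?thesis by (simp add: card_image card_cartesian_product)
qed

lemma Suc_mult_choose_recurrence: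
  "Suc k * (Suc k choose h) = Suc h * (k choose Suc h) + (2 * h + 1) * (k choose h) + h * (k choose (h - 1))"
proof (cases h)
  case (Suc h')
  have down: "Suc h * (k choose Suc h) = (k - h) * (k choose h)"
    using binomial_absorption[of h k] binomial_absorb_comp[of k h] by simp
  have up: "h * (k choose h) = (k - h') * (k choose h')"
    using binomial_absorption[of h' k] binomial_absorb_comp[of k h'] Suc by simp
  show ?thesis
  proof (cases "h \<le> k")
    case True
    then obtain m where m: "k = h + m" using le_Suc_ex by blast
    have "Suc k * (Suc k choose h) = Suc (h + m) * ((k choose h) + (k choose h'))"
      using Suc m by simp
    also have "\<dots> = m * (k choose h) + (2 * h + 1) * (k choose h) + h * (k choose h')"
      using up m Suc by (simp add: algebra_simps)
    finally show ?thesis using down m Suc by simp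
  next
    case False
    then show ?thesis using Suc by (auto simp: binomial_eq_0 not_le less_Suc_eq)
  qed
qed simp

theorem card_histories: "card (histories k h) = fact k * (k choose h)"
proof (induction k arbitrary: h)
  case 0
  have "histories 0 h = (if h = 0 then {[]} else {})" by (auto simp: histories_def)
  then show ?case by simp
next
  case (Suc k)
  have fin: "finite (snoc_step s ` (histories k h' \<times> {..<m}))" for s h' m
    using finite_histories by simp
  have disj: "s \<noteq> s' \<Longrightarrow> snoc_step s ` A \<inter> snoc_step s' ` B = {}" for s s' A B
    by (auto simp: snoc_step_def)
  have "card (histories (Suc k) h) = card (histories k (Suc h)) * Suc h + card (histories k h) * h
      + card (histories k h) * Suc h + card (histories k (h - 1)) * h"
    unfolding histories_Suc using fin
    by (simp add: card_Un_disjoint card_snoc_step disj Int_Un_distrib2)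
  also have "\<dots> = fact k * (Suc h * (k choose Suc h) + (2 * h + 1) * (k choose h) + h * (k choose (h - 1)))"
    using Suc.IH by (simp add: algebra_simps)
  also have "\<dots> = fact (Suc k) * (Suc k choose h)"
    by (simp only: Suc_mult_choose_recurrence[symmetric]) (simp add: algebra_simps)
  finally show ?case .
qed

definition history_of :: "(nat \<Rightarrow> step_kind) \<Rightarrow> (nat \<Rightarrow> nat) \<Rightarrow> nat \<Rightarrow> (step_kind \<times> nat) list" where
  "history_of K W m = map (\<lambda>x. (K x, W x)) [1..<Suc m]"

lemma length_history_of [simp]: "length (history_of K W m) = m"
  by (simp add: history_of_def)

lemma take_history_of: "i \<le> m \<Longrightarrow> take i (history_of K W m) = history_of K W i"
  by (simp add: history_of_def take_map min_def del: upt_Suc)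

lemma nth_history_of: "i < m \<Longrightarrow> history_of K W m ! i = (K (Suc i), W (Suc i))"
  by (simp add: history_of_def del: upt_Suc)

lemma history_of_eq_iff:
  "history_of K W m = history_of K' W' m \<longleftrightarrow> (\<forall>x\<in>{1..m}. K x = K' x \<and> W x = W' x)"
  by (auto simp: history_of_def)

lemma sum_list_history_of: "(\<Sum>y\<leftarrow>history_of K W m. g y) = (\<Sum>x=1..m. g (K x, W x))"
  by (simp add: history_of_def sum_set_upt_conv_sum_list_nat[symmetric]
      atLeastLessThanSuc_atLeastAtMost del: upt_Suc)

context
  fixes K :: "nat \<Rightarrow> step_kind" and W H :: "nat \<Rightarrow> nat" and n :: nat
  assumes start: "H (Suc 0) = 0"
    and step: "\<And>x. x \<in> {1..n} \<Longrightarrow> history_step (K x) (W x) (H x) = Some (H (Suc x))"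
begin

lemma walk_history_of: "m \<le> n \<Longrightarrow> walk 0 (history_of K W m) = Some (H (Suc m))"
proof (induction m)
  case (Suc m)
  then show ?case using step[of "Suc m"] by (simp add: history_of_def walk_snoc)
qed (simp add: history_of_def start)

lemma history_of_in_histories: "H (Suc n) = 0 \<Longrightarrow> history_of K W n \<in> histories n 0"
  using walk_history_of[of n] by (simp add: histories_def)

end

definition hist_des :: "(step_kind \<times> nat) list \<Rightarrow> nat" where
  "hist_des l = (\<Sum>(k, w)\<leftarrow>l. of_bool (des_kind k))"

definition hist_zero_asc :: "(step_kind \<times> nat) list \<Rightarrow> nat" where
  "hist_zero_asc l = (\<Sum>(k, w)\<leftarrow>l. of_bool (k = Level_asc \<and> w = 0))"

definition hist_weight :: "(step_kind \<times> nat) list \<Rightarrow> nat" where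
  "hist_weight l = (\<Sum>(k, w)\<leftarrow>l. w)"

definition hist_slack :: "(step_kind \<times> nat) list \<Rightarrow> nat" where
  "hist_slack l = (\<Sum>i<length l. the (walk 0 (take i l)) - snd (l ! i) - of_bool (des_kind (fst (l ! i))))"

definition hist_stats :: "(step_kind \<times> nat) list \<Rightarrow> nat \<times> nat \<times> nat \<times> nat \<times> nat" where
  "hist_stats l = (length l - hist_des l, hist_zero_asc l, hist_weight l, hist_slack l,
                   hist_des l + hist_weight l + 2 * hist_slack l)"

lemma hist_stats_history_of:
  assumes start: "H (Suc 0) = 0"
    and step: "\<And>x. x \<in> {1..n} \<Longrightarrow> history_step (K x) (W x) (H x) = Some (H (Suc x))"
    and "card {x \<in> {1..n}. des_kind (K x)} = d"
    and "card {x \<in> {1..n}. K x = Level_asc \<and> W x = 0} = z"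
    and "sum W {1..n} = w"
    and "(\<Sum>x=1..n. H x - W x - of_bool (des_kind (K x))) = s"
  shows "hist_stats (history_of K W n) = (n - d, z, w, s, d + w + 2 * s)"
proof -
  have "walk 0 (history_of K W i) = Some (H (Suc i))" if "i < n" for i
    by (rule walk_history_of[where H = H and n = n]) (use start step that in auto)
  then have "hist_slack (history_of K W n) = (\<Sum>i<n. H (Suc i) - W (Suc i) - of_bool (des_kind (K (Suc i))))"
    unfolding hist_slack_def
    by (intro sum.cong) (simp_all add: take_history_of nth_history_of)
  also have "\<dots> = s" using assms(6) by (simp add: sum.atLeast1_atMost_eq)
  finally show ?thesis
    using assms(3-5) by (simp add: hist_stats_def hist_des_def hist_zero_asc_def hist_weight_def
        sum_list_history_of Int_def)
qed

lemma card_eq_if_Diff_singleton_eq: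
  assumes "finite A" "finite B" "A - {a} = B - {b}"
  shows "card A + of_bool (b \<in> B) = card B + of_bool (a \<in> A)"
proof -
  have remove: "card X = card (X - {x}) + of_bool (x \<in> X)" if "finite X" for X and x :: 'a
    using that card_gt_0_iff[of X] by (cases "x \<in> X") auto
  show ?thesis
    using remove[OF assms(1), of a] remove[OF assms(2), of b] assms(3) by simp
qed

lemma card_filter_add_filter_not:
  "finite A \<Longrightarrow> card {x \<in> A. P x} + card {x \<in> A. \<not> P x} = card A"
  by (subst card_Un_disjoint[symmetric]) (auto intro: arg_cong[where f = card])

lemma card_pairs_eq_sum_fst:
  "finite A \<Longrightarrow> card {(i, j). i \<in> A \<and> j \<in> A \<and> P i j} = (\<Sum>i\<in>A. card {j \<in> A. P i j})"
proof -
  have "{(i, j). i \<in> A \<and> j \<in> A \<and> P i j} = (SIGMA i:A. {j \<in> A. P i j})" by auto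
  then show "finite A \<Longrightarrow> ?thesis" by simp
qed

lemma card_pairs_eq_sum_snd:
  "finite A \<Longrightarrow> card {(i, j). i \<in> A \<and> j \<in> A \<and> P i j} = (\<Sum>j\<in>A. card {i \<in> A. P i j})"
proof -
  have "{(i, j). i \<in> A \<and> j \<in> A \<and> P i j} = prod.swap ` {(j, i). j \<in> A \<and> i \<in> A \<and> P i j}" by auto
  then have "card {(i, j). i \<in> A \<and> j \<in> A \<and> P i j} = card {(j, i). j \<in> A \<and> i \<in> A \<and> P i j}"
    by (simp add: card_image)
  then show "finite A \<Longrightarrow> ?thesis" using card_pairs_eq_sum_fst[of A "\<lambda>j i. P i j"] by simp
qed

lemma card_pairs_disj:
  assumes "finite A" and "\<And>i j. \<not> (P i j \<and> Q i j)"
  shows "card {(i, j). i \<in> A \<and> j \<in> A \<and> (P i j \<or> Q i j)}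
       = card {(i, j). i \<in> A \<and> j \<in> A \<and> P i j} + card {(i, j). i \<in> A \<and> j \<in> A \<and> Q i j}"
proof -
  have "finite {(i, j). i \<in> A \<and> j \<in> A \<and> R i j}" for R
    by (rule finite_subset[of _ "A \<times> A"]) (use assms(1) in auto)
  moreover have "{(i, j). i \<in> A \<and> j \<in> A \<and> (P i j \<or> Q i j)}
      = {(i, j). i \<in> A \<and> j \<in> A \<and> P i j} \<union> {(i, j). i \<in> A \<and> j \<in> A \<and> Q i j}"
    by auto
  ultimately show ?thesis
    using assms(2) by (simp add: card_Un_disjoint disjoint_iff)
qed

lemma inj_on_card_greater:
  fixes U :: "'a :: linorder set"
  assumes "finite U"
  shows "inj_on (\<lambda>i. card {j \<in> U. i < j}) U"
proof (rule inj_onI)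
  have less: "card {j \<in> U. y < j} < card {j \<in> U. x < j}" if "y \<in> U" "x < y" for x y
  proof (rule psubset_card_mono)
    show "finite {j \<in> U. x < j}" using assms by simp
    show "{j \<in> U. y < j} \<subset> {j \<in> U. x < j}" using that by auto
  qed
  fix x y assume "x \<in> U" "y \<in> U" and same: "card {j \<in> U. x < j} = card {j \<in> U. y < j}"
  show "x = y"
  proof (rule ccontr)
    assume "x \<noteq> y"
    then consider "x < y" | "y < x" using linorder_neqE by blast
    then show False
      using less[OF \<open>y \<in> U\<close>, of x] less[OF \<open>x \<in> U\<close>, of y] same by cases simp_all
  qed
qed

lemma less_iff_card_filter_less:
  fixes f :: "'a \<Rightarrow> 'b :: linorder"
  assumes "finite V" "a \<in> V" "f a \<noteq> c"
  shows "f a < c \<longleftrightarrow> card {v \<in> V. f v < f a} < card {v \<in> V. f v < c}"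
proof
  assume "f a < c"
  show "card {v \<in> V. f v < f a} < card {v \<in> V. f v < c}"
  proof (rule psubset_card_mono)
    show "finite {v \<in> V. f v < c}" using assms(1) by simp
    show "{v \<in> V. f v < f a} \<subset> {v \<in> V. f v < c}"
      using \<open>f a < c\<close> assms(2) by auto
  qed
next
  assume card_less: "card {v \<in> V. f v < f a} < card {v \<in> V. f v < c}"
  show "f a < c"
  proof (rule ccontr)
    assume "\<not> f a < c"
    then have "{v \<in> V. f v < c} \<subseteq> {v \<in> V. f v < f a}" using assms(3) by auto
    then have "card {v \<in> V. f v < c} \<le> card {v \<in> V. f v < f a}"
      using assms(1) by (simp add: card_mono)
    then show False using card_less by simp
  qed
qed

locale interval_perm =
  fixes n :: nat and p :: "nat \<Rightarrow> nat"
  assumes permutes: "p permutes {1..n}"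
begin

lemma p_outside: "i \<notin> {1..n} \<Longrightarrow> p i = i"
  using permutes by (simp add: permutes_not_in)

lemma p_0 [simp]: "p 0 = 0"
  by (simp add: p_outside)

lemma p_in: "i \<in> {1..n} \<Longrightarrow> p i \<in> {1..n}"
  using permutes_in_image[OF permutes] by blast

lemma p_le: "i \<le> n \<Longrightarrow> p i \<le> n"
  using p_in[of i] by (cases "i = 0") auto

lemma p_inv [simp]: "p (inv p x) = x"
  using permutes by (simp add: permutes_inverses)

lemma inv_p [simp]: "inv p (p i) = i"
  using permutes by (simp add: permutes_inverses)

lemma inv_in: "x \<in> {1..n} \<Longrightarrow> inv p x \<in> {1..n}"
  using permutes_in_image[OF permutes_inv[OF permutes]] by blast

lemma p_eq_iff [simp]: "p i = p j \<longleftrightarrow> i = j"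
  by (metis inv_p)

lemma inv_eq_iff [simp]: "inv p x = inv p y \<longleftrightarrow> x = y"
  by (metis p_inv)

lemma p_eq_iff_inv: "p i = x \<longleftrightarrow> i = inv p x"
  by auto

lemma inv_eq_iff_p: "inv p x = i \<longleftrightarrow> x = p i"
  by auto

lemma sum_reindex_inv: "(\<Sum>i\<in>{1..n}. f i) = (\<Sum>x\<in>{1..n}. f (inv p x))"
  using sum.permute[OF permutes_inv[OF permutes], of f] by (simp add: comp_def)

lemma card_reindex_inv: "card {i \<in> {1..n}. P i} = card {x \<in> {1..n}. P (inv p x)}"
proof -
  have "bij_betw p {i \<in> {1..n}. P i} {x \<in> {1..n}. P (inv p x)}"
    by (rule bij_betw_byWitness[of _ "inv p"]) (use p_in inv_in in \<open>fastforce+\<close>)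
  then show ?thesis by (rule bij_betw_same_card)
qed

lemma card_pairs_eq_sum_inv_fst:
  "card {(i, j). i \<in> {1..n} \<and> j \<in> {1..n} \<and> P i j} = (\<Sum>x\<in>{1..n}. card {j \<in> {1..n}. P (inv p x) j})"
  using card_pairs_eq_sum_fst[of "{1..n}" P] sum_reindex_inv by simp

lemma card_pairs_eq_sum_inv_snd:
  "card {(i, j). i \<in> {1..n} \<and> j \<in> {1..n} \<and> P i j} = (\<Sum>x\<in>{1..n}. card {i \<in> {1..n}. P i (inv p x)})"
  using card_pairs_eq_sum_snd[of "{1..n}" P] sum_reindex_inv by simp

lemma card_less_value: "v \<le> Suc n \<Longrightarrow> card {i \<in> {1..n}. p i < v} = v - 1"
proof -
  assume v: "v \<le> Suc n"
  have "card {i \<in> {1..n}. p i < v} = card {x \<in> {1..n}. x < v}"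
    using card_reindex_inv[of "\<lambda>i. p i < v"] by simp
  also have "{x \<in> {1..n}. x < v} = {1..<v}" using v by auto
  finally show ?thesis by simp
qed

end

lemma permutes_eq_if_same_order:
  fixes n :: nat
  assumes "p1 permutes {1..n}" and "p2 permutes {1..n}"
    and same_order: "\<And>x y. x \<in> {1..n} \<Longrightarrow> y \<in> {1..n} \<Longrightarrow> p1 x < p1 y \<longleftrightarrow> p2 x < p2 y"
  shows "p1 = p2"
proof
  interpret p1: interval_perm n p1 by unfold_locales fact
  interpret p2: interval_perm n p2 by unfold_locales fact
  fix x
  show "p1 x = p2 x"
  proof (cases "x \<in> {1..n}")
    case True
    have "{y \<in> {1..n}. p1 y < p1 x} = {y \<in> {1..n}. p2 y < p2 x}"
      using same_order[OF _ True] by blast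
    moreover have "p1 x \<in> {1..n}" "p2 x \<in> {1..n}"
      using p1.p_in[OF True] p2.p_in[OF True] .
    ultimately have "p1 x - 1 = p2 x - 1"
      using p1.card_less_value[of "p1 x"] p2.card_less_value[of "p2 x"] by simp
    then show ?thesis using \<open>p1 x \<in> {1..n}\<close> \<open>p2 x \<in> {1..n}\<close> by auto
  qed (simp add: p1.p_outside p2.p_outside)
qed

section \<open>The Francon-Viennot history\<close>

text \<open>Outside \<open>{1..n}\<close> a permutation is the identity, so \<open>\<sigma> 0 = 0\<close> and \<open>\<sigma> (n + 1) = n + 1\<close>
  act as sentinels at both ends.\<close>

definition desc_top :: "(nat \<Rightarrow> nat) \<Rightarrow> nat \<Rightarrow> bool" where
  "desc_top \<sigma> x \<longleftrightarrow> \<sigma> (Suc (inv \<sigma> x)) < x"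

definition desc_bottom :: "(nat \<Rightarrow> nat) \<Rightarrow> nat \<Rightarrow> bool" where
  "desc_bottom \<sigma> x \<longleftrightarrow> x < \<sigma> (inv \<sigma> x - 1)"

definition fv_kind :: "(nat \<Rightarrow> nat) \<Rightarrow> nat \<Rightarrow> step_kind" where
  "fv_kind \<sigma> x = (if desc_top \<sigma> x then if desc_bottom \<sigma> x then Level_des else Down
                   else if desc_bottom \<sigma> x then Up else Level_asc)"

definition pat31_2_at :: "nat \<Rightarrow> (nat \<Rightarrow> nat) \<Rightarrow> nat \<Rightarrow> nat" where
  "pat31_2_at n \<sigma> x = card {i \<in> {1..n}. i + 1 < inv \<sigma> x \<and> x < \<sigma> i \<and> \<sigma> (i + 1) < x}"

definition pat2_31_at :: "nat \<Rightarrow> (nat \<Rightarrow> nat) \<Rightarrow> nat \<Rightarrow> nat" where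
  "pat2_31_at n \<sigma> x = card {i \<in> {1..n}. inv \<sigma> x + 1 < i \<and> x < \<sigma> (i - 1) \<and> \<sigma> i < x}"

text \<open>Its cardinality is the height of the history before the step of \<open>x\<close>.\<close>

definition straddling :: "nat \<Rightarrow> (nat \<Rightarrow> nat) \<Rightarrow> nat \<Rightarrow> nat set" where
  "straddling n \<sigma> x = {k \<in> {1..n}. x \<le> \<sigma> (k - 1) \<and> \<sigma> k < x}"

definition fv_history :: "nat \<Rightarrow> (nat \<Rightarrow> nat) \<Rightarrow> (step_kind \<times> nat) list" where
  "fv_history n \<sigma> = history_of (fv_kind \<sigma>) (pat31_2_at n \<sigma>) n"

lemma des_kind_fv_kind [simp]: "des_kind (fv_kind \<sigma> x) \<longleftrightarrow> desc_top \<sigma> x"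
  by (simp add: des_kind_def fv_kind_def)

lemma fv_kind_eq_Level_asc [simp]: "fv_kind \<sigma> x = Level_asc \<longleftrightarrow> \<not> desc_top \<sigma> x \<and> \<not> desc_bottom \<sigma> x"
  by (simp add: fv_kind_def)

context interval_perm
begin

lemma desc_top_Suc_le: "desc_top p x \<Longrightarrow> x \<in> {1..n} \<Longrightarrow> Suc (inv p x) \<le> n"
  using p_outside[of "Suc (inv p x)"] by (force simp: desc_top_def)

lemma straddling_eq:
  assumes x: "x \<in> {1..n}"
  shows "straddling n p x = Suc ` {i \<in> {1..n}. i + 1 < inv p x \<and> x < p i \<and> p (i + 1) < x}
     \<union> (if desc_top p x then {Suc (inv p x)} else {})
     \<union> {i \<in> {1..n}. inv p x + 1 < i \<and> x < p (i - 1) \<and> p i < x}"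
  (is "_ = ?Left \<union> ?Mid \<union> ?Right")
proof (intro equalityI subsetI)
  fix k assume k: "k \<in> straddling n p x"
  then have k_bounds: "k \<in> {1..n}" "x \<le> p (k - 1)" "p k < x" by (auto simp: straddling_def)
  then have "k \<noteq> inv p x" "k \<noteq> 1" using x by auto
  then consider "k < inv p x" | "k = Suc (inv p x)" | "Suc (inv p x) < k" by linarith
  then show "k \<in> ?Left \<union> ?Mid \<union> ?Right"
  proof cases
    case 1
    then have "p (k - 1) \<noteq> x" by (auto simp: p_eq_iff_inv)
    then have "k - 1 \<in> {i \<in> {1..n}. i + 1 < inv p x \<and> x < p i \<and> p (i + 1) < x}"
      using 1 k_bounds \<open>k \<noteq> 1\<close> by auto
    moreover have "k = Suc (k - 1)" using \<open>k \<noteq> 1\<close> k_bounds by simp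
    ultimately show ?thesis by blast
  next
    case 2
    then show ?thesis using k_bounds by (simp add: desc_top_def)
  next
    case 3
    then have "p (k - 1) \<noteq> x" by (auto simp: p_eq_iff_inv)
    then show ?thesis using 3 k_bounds by auto
  qed
next
  fix k assume "k \<in> ?Left \<union> ?Mid \<union> ?Right"
  then show "k \<in> straddling n p x"
    using desc_top_Suc_le[OF _ x] inv_in[OF x] by (auto simp: straddling_def desc_top_def split: if_splits)
qed

lemma card_straddling:
  assumes "x \<in> {1..n}"
  shows "card (straddling n p x) = pat31_2_at n p x + of_bool (desc_top p x) + pat2_31_at n p x"
proof -
  let ?L = "{i \<in> {1..n}. i + 1 < inv p x \<and> x < p i \<and> p (i + 1) < x}"
  let ?M = "if desc_top p x then {Suc (inv p x)} else {}"
  let ?R = "{i \<in> {1..n}. inv p x + 1 < i \<and> x < p (i - 1) \<and> p i < x}"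
  have "Suc ` ?L \<inter> ?M = {}" "(Suc ` ?L \<union> ?M) \<inter> ?R = {}"
    by auto
  then have "card (Suc ` ?L \<union> ?M \<union> ?R) = card (Suc ` ?L) + card ?M + card ?R"
    by (simp add: card_Un_disjoint)
  also have "\<dots> = pat31_2_at n p x + of_bool (desc_top p x) + pat2_31_at n p x"
    by (simp add: card_image pat31_2_at_def pat2_31_at_def)
  finally show ?thesis
    using straddling_eq[OF assms] by simp
qed

lemma card_straddling_Suc:
  assumes x: "x \<in> {1..n}"
  shows "card (straddling n p (Suc x)) + of_bool (desc_top p x)
       = card (straddling n p x) + of_bool (desc_bottom p x)"
proof -
  let ?i = "inv p x"
  have "k \<in> straddling n p (Suc x) - {?i} \<longleftrightarrow> k \<in> straddling n p x - {Suc ?i}" for k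
  proof (cases "k = ?i \<or> k = Suc ?i")
    case True
    then show ?thesis by (auto simp: straddling_def)
  next
    case False
    then have "p k \<noteq> x" and "1 \<le> k \<Longrightarrow> p (k - 1) \<noteq> x"
      by (auto simp: p_eq_iff_inv)
    then show ?thesis using False by (auto simp: straddling_def)
  qed
  moreover have "?i \<in> straddling n p (Suc x) \<longleftrightarrow> desc_bottom p x"
    using inv_in[OF x] by (auto simp: straddling_def desc_bottom_def)
  moreover have "Suc ?i \<in> straddling n p x \<longleftrightarrow> desc_top p x"
    using desc_top_Suc_le[OF _ x] by (auto simp: straddling_def desc_top_def)
  ultimately show ?thesis
    using card_eq_if_Diff_singleton_eq[of "straddling n p (Suc x)" "straddling n p x" ?i "Suc ?i"]
    by (simp add: straddling_def set_eq_iff)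
qed

lemma fv_history_step:
  assumes "x \<in> {1..n}"
  shows "history_step (fv_kind p x) (pat31_2_at n p x) (card (straddling n p x))
       = Some (card (straddling n p (Suc x)))"
  using card_straddling[OF assms] card_straddling_Suc[OF assms]
  by (auto simp: history_step_def fv_kind_def)

lemma straddling_1: "straddling n p (Suc 0) = {}"
  using p_in by (fastforce simp: straddling_def)

lemma straddling_Suc_n: "straddling n p (Suc n) = {}"
proof -
  have "k \<notin> straddling n p (Suc n)" for k
  proof
    assume "k \<in> straddling n p (Suc n)"
    then have "k - 1 \<le> n" "Suc n \<le> p (k - 1)" by (auto simp: straddling_def)
    then show False using p_le[of "k - 1"] by simp
  qed
  then show ?thesis by blast
qed

lemma fv_history_in_histories: "fv_history n p \<in> histories n 0"
  unfolding fv_history_def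
  by (rule history_of_in_histories[where H = "\<lambda>x. card (straddling n p x)"])
    (simp_all add: straddling_1 straddling_Suc_n fv_history_step)

lemma pat31_2_eq_sum: "pat31_2 n p = (\<Sum>x\<in>{1..n}. pat31_2_at n p x)"
  unfolding pat31_2_def pat31_2_at_def
  by (subst card_pairs_eq_sum_inv_snd) (simp add: conj_commute)

lemma pat2_31_eq_sum: "pat2_31 n p = (\<Sum>x\<in>{1..n}. pat2_31_at n p x)"
  unfolding pat2_31_def pat2_31_at_def
  by (subst card_pairs_eq_sum_inv_snd) (simp add: conj_commute)

lemma descent_before_n: "i \<in> {1..n} \<Longrightarrow> i < n \<and> p (Suc i) < p i \<longleftrightarrow> p (Suc i) < p i"
  using p_in[of i] p_outside[of "Suc n"] by (cases "i = n") auto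

lemma des_eq_card_desc_top: "des n p = card {x \<in> {1..n}. desc_top p x}"
proof -
  have "{i \<in> {1..<n}. p i > p (Suc i)} = {i \<in> {1..n}. p (Suc i) < p i}"
    using descent_before_n by fastforce
  then show ?thesis
    unfolding des_def desc_top_def using card_reindex_inv[of "\<lambda>i. p (Suc i) < p i"] by simp
qed

lemma left_to_right_max_iff:
  assumes x: "x \<in> {1..n}"
  shows "(\<forall>j\<in>{1..inv p x}. p j \<le> x) \<longleftrightarrow> \<not> desc_bottom p x \<and> pat31_2_at n p x = 0"
proof
  assume max: "\<forall>j\<in>{1..inv p x}. p j \<le> x"
  have "p (inv p x - 1) \<le> x"
    using max by (cases "inv p x = 1") auto
  moreover have "\<not> x < p i" if "1 \<le> i" "i + 1 < inv p x" for i
    using max[rule_format, of i] that by auto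
  then have "{i \<in> {1..n}. i + 1 < inv p x \<and> x < p i \<and> p (i + 1) < x} = {}"
    by auto
  ultimately show "\<not> desc_bottom p x \<and> pat31_2_at n p x = 0"
    by (simp add: desc_bottom_def pat31_2_at_def)
next
  assume no_bottom: "\<not> desc_bottom p x \<and> pat31_2_at n p x = 0"
  show "\<forall>j\<in>{1..inv p x}. p j \<le> x"
  proof (rule ccontr)
    define J where "J = {j. 1 \<le> j \<and> j < inv p x \<and> x < p j}"
    define m where "m = Max J"
    assume "\<not> (\<forall>j\<in>{1..inv p x}. p j \<le> x)"
    then have "J \<noteq> {}" by (force simp: J_def le_less)
    moreover have fin: "finite J" by (simp add: J_def)
    ultimately have "m \<in> J" by (simp add: m_def)
    have "Suc m \<notin> J"
    proof
      assume "Suc m \<in> J"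
      then have "Suc m \<le> m" using Max_ge[OF fin] by (simp add: m_def)
      then show False by simp
    qed
    from \<open>m \<in> J\<close> have m: "1 \<le> m" "m < inv p x" "x < p m" by (simp_all add: J_def)
    \<comment> \<open>The last entry left of \<open>x\<close> exceeding \<open>x\<close> is followed by a smaller entry:
      either \<open>x\<close> itself, or the \<open>1\<close> of a \<open>31-2\<close> occurrence whose \<open>2\<close> is \<open>x\<close>.\<close>
    show False
    proof (cases "Suc m = inv p x")
      case True
      then have "inv p x - 1 = m" by simp
      then show False using m no_bottom by (simp add: desc_bottom_def)
    next
      case False
      then have "p (Suc m) \<noteq> x" by (auto simp: p_eq_iff_inv)
      with \<open>Suc m \<notin> J\<close> m False have "p (Suc m) < x" by (simp add: J_def)
      then have "m \<in> {i \<in> {1..n}. i + 1 < inv p x \<and> x < p i \<and> p (i + 1) < x}"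
        using m False inv_in[OF x] by auto
      then show False using no_bottom by (auto simp: pat31_2_at_def)
    qed
  qed
qed

lemma fmax_eq_card: "fmax n p = card {x \<in> {1..n}. fv_kind p x = Level_asc \<and> pat31_2_at n p x = 0}"
proof -
  have "{i \<in> {1..n}. \<not> (i < n \<and> p i > p (Suc i)) \<and> (\<forall>j \<in> {1..i}. p j \<le> p i)}
      = {i \<in> {1..n}. \<not> p (Suc i) < p i \<and> (\<forall>j \<in> {1..i}. p j \<le> p i)}"
    using descent_before_n by fastforce
  moreover have "{x \<in> {1..n}. \<not> desc_top p x \<and> (\<forall>j \<in> {1..inv p x}. p j \<le> x)}
      = {x \<in> {1..n}. fv_kind p x = Level_asc \<and> pat31_2_at n p x = 0}"
    using left_to_right_max_iff by auto
  ultimately show ?thesis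
    unfolding fmax_def desc_top_def
    using card_reindex_inv[of "\<lambda>i. \<not> p (Suc i) < p i \<and> (\<forall>j \<in> {1..i}. p j \<le> p i)"] by simp
qed

lemma fv_history_stats:
  "hist_stats (fv_history n p) = (ndes n p, fmax n p, pat31_2 n p, pat2_31 n p, MAD n p)"
  unfolding fv_history_def ndes_def MAD_def
proof (rule hist_stats_history_of[where H = "\<lambda>x. card (straddling n p x)"])
  show "(\<Sum>x=1..n. card (straddling n p x) - pat31_2_at n p x - of_bool (des_kind (fv_kind p x)))
      = pat2_31 n p"
    unfolding pat2_31_eq_sum
    by (intro sum.cong) (simp_all add: card_straddling)
qed (simp_all add: straddling_1 fv_history_step des_eq_card_desc_top fmax_eq_card pat31_2_eq_sum)

end

section \<open>Injectivity of the Francon-Viennot history\<close>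

text \<open>The descents of \<open>\<sigma>\<close> crossing the level \<open>t + 1/2\<close> at or left of the position of \<open>z\<close>.\<close>

definition crossings_left :: "nat \<Rightarrow> (nat \<Rightarrow> nat) \<Rightarrow> nat \<Rightarrow> nat \<Rightarrow> nat set" where
  "crossings_left n \<sigma> z t = {k \<in> {1..n}. k \<le> inv \<sigma> z \<and> t < \<sigma> (k - 1) \<and> \<sigma> k \<le> t}"

context interval_perm
begin

lemma crossings_left_pred:
  assumes y: "y \<in> {1..n}"
  shows "crossings_left n p y (y - 1) = Suc ` {i \<in> {1..n}. i + 1 < inv p y \<and> y < p i \<and> p (i + 1) < y}"
proof (intro equalityI subsetI)
  fix k assume k: "k \<in> crossings_left n p y (y - 1)"
  then have k_bounds: "k \<in> {1..n}" "k \<le> inv p y" "y - 1 < p (k - 1)" "p k \<le> y - 1"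
    by (auto simp: crossings_left_def)
  then have "k \<noteq> inv p y" "k \<noteq> 1" using y by auto
  then have "p (k - 1) \<noteq> y" using k_bounds(2) by (auto simp: p_eq_iff_inv)
  then have "k - 1 \<in> {i \<in> {1..n}. i + 1 < inv p y \<and> y < p i \<and> p (i + 1) < y}"
    using k_bounds \<open>k \<noteq> inv p y\<close> \<open>k \<noteq> 1\<close> y by auto
  moreover have "k = Suc (k - 1)" using \<open>k \<noteq> 1\<close> k_bounds by simp
  ultimately show "k \<in> Suc ` {i \<in> {1..n}. i + 1 < inv p y \<and> y < p i \<and> p (i + 1) < y}" by blast
next
  fix k assume "k \<in> Suc ` {i \<in> {1..n}. i + 1 < inv p y \<and> y < p i \<and> p (i + 1) < y}"
  then show "k \<in> crossings_left n p y (y - 1)"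
    using inv_in[OF y] by (auto simp: crossings_left_def)
qed

lemma card_crossings_left_pred:
  assumes "y \<in> {1..n}"
  shows "card (crossings_left n p y (y - 1)) = pat31_2_at n p y"
  unfolding crossings_left_pred[OF assms] pat31_2_at_def by (simp add: card_image)

lemma card_crossings_left_self:
  assumes x: "x \<in> {1..n}"
  shows "card (crossings_left n p x x) = pat31_2_at n p x + of_bool (desc_bottom p x)"
proof -
  have "k \<in> crossings_left n p x x \<longleftrightarrow> k \<in> crossings_left n p x (x - 1) \<or> (k = inv p x \<and> desc_bottom p x)"
    for k
  proof (cases "k = inv p x")
    case False
    then have "p k \<noteq> x" "k \<noteq> Suc (inv p x) \<Longrightarrow> p (k - 1) \<noteq> x" by (auto simp: p_eq_iff_inv)
    then show ?thesis using False x by (auto simp: crossings_left_def)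
  qed (use inv_in[OF x] in \<open>auto simp: crossings_left_def desc_bottom_def\<close>)
  then have "crossings_left n p x x = crossings_left n p x (x - 1) \<union> (if desc_bottom p x then {inv p x} else {})"
    by auto
  moreover have "inv p x \<notin> crossings_left n p x (x - 1)"
    using x by (auto simp: crossings_left_def)
  ultimately show ?thesis
    using card_crossings_left_pred[OF x] by (simp add: crossings_left_def)
qed

lemma card_crossings_left_Suc:
  assumes x: "x \<in> {1..n}" and t: "x \<le> t" "t < n"
  defines "q \<equiv> inv p (Suc t)"
  shows "card (crossings_left n p x (Suc t)) + of_bool (q < inv p x \<and> desc_top p (Suc t))
       = card (crossings_left n p x t) + of_bool (q < inv p x \<and> desc_bottom p (Suc t))"
proof -
  have st: "Suc t \<in> {1..n}" using t by simp
  have "k \<in> crossings_left n p x (Suc t) - {q} \<longleftrightarrow> k \<in> crossings_left n p x t - {Suc q}" for k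
  proof (cases "k = q \<or> k = Suc q")
    case True
    then show ?thesis by (auto simp: crossings_left_def q_def)
  next
    case False
    then have "p k \<noteq> Suc t" and "1 \<le> k \<Longrightarrow> p (k - 1) \<noteq> Suc t"
      by (auto simp: p_eq_iff_inv q_def)
    then show ?thesis using False by (auto simp: crossings_left_def)
  qed
  moreover have "q \<in> crossings_left n p x (Suc t) \<longleftrightarrow> q < inv p x \<and> desc_bottom p (Suc t)"
    using inv_in[OF st] t by (auto simp: crossings_left_def desc_bottom_def q_def le_less)
  moreover have "Suc q \<in> crossings_left n p x t \<longleftrightarrow> q < inv p x \<and> desc_top p (Suc t)"
    using inv_in[OF x] by (auto simp: crossings_left_def desc_top_def q_def)
  ultimately show ?thesis
    using card_eq_if_Diff_singleton_eq[of "crossings_left n p x (Suc t)" "crossings_left n p x t" q "Suc q"]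
    by (simp add: crossings_left_def set_eq_iff)
qed

lemma inv_less_iff_card_crossings_left:
  assumes x: "x \<in> {1..n}" and y: "y \<in> {1..n}" and "x < y"
  shows "inv p y < inv p x \<longleftrightarrow> pat31_2_at n p y < card (crossings_left n p x (y - 1))"
proof
  assume yx: "inv p y < inv p x"
  define M where "M = {k. inv p y < k \<and> k \<le> inv p x \<and> p k \<le> y - 1}"
  define k where "k = Min M"
  have "inv p x \<in> M" using yx \<open>x < y\<close> by (simp add: M_def)
  then have "M \<noteq> {}" "finite M" by (auto simp: M_def)
  then have "k \<in> M" and k_min: "\<And>j. j \<in> M \<Longrightarrow> k \<le> j" by (simp_all add: k_def)
  then have k: "inv p y < k" "k \<le> inv p x" "p k \<le> y - 1" by (simp_all add: M_def)
  \<comment> \<open>The first entry right of \<open>y\<close> and below \<open>y\<close> ends a descent crossing \<open>y - 1/2\<close>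
    that is counted for \<open>x\<close> but not for \<open>y\<close>.\<close>
  have "y - 1 < p (k - 1)"
  proof (cases "k - 1 = inv p y")
    case False
    then have "k - 1 \<notin> M" using k_min[of "k - 1"] k by fastforce
    then show ?thesis using False k by (auto simp: M_def)
  qed (use y in simp)
  then have "k \<in> crossings_left n p x (y - 1) - crossings_left n p y (y - 1)"
    using k inv_in[OF x] inv_in[OF y] by (auto simp: crossings_left_def)
  moreover have "crossings_left n p y (y - 1) \<subseteq> crossings_left n p x (y - 1)"
    using yx by (auto simp: crossings_left_def)
  ultimately have "crossings_left n p y (y - 1) \<subset> crossings_left n p x (y - 1)" by blast
  moreover have "finite (crossings_left n p x (y - 1))" by (simp add: crossings_left_def)
  ultimately show "pat31_2_at n p y < card (crossings_left n p x (y - 1))"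
    using psubset_card_mono card_crossings_left_pred[OF y] by metis
next
  assume less: "pat31_2_at n p y < card (crossings_left n p x (y - 1))"
  show "inv p y < inv p x"
  proof (rule ccontr)
    assume "\<not> inv p y < inv p x"
    then have "crossings_left n p x (y - 1) \<subseteq> crossings_left n p y (y - 1)"
      by (auto simp: crossings_left_def)
    then have "card (crossings_left n p x (y - 1)) \<le> pat31_2_at n p y"
      using card_crossings_left_pred[OF y] card_mono[of "crossings_left n p y (y - 1)"]
      by (simp add: crossings_left_def)
    then show False using less by simp
  qed
qed

end

locale two_interval_perms = p1: interval_perm n p1 + p2: interval_perm n p2
  for n :: nat and p1 p2 :: "nat \<Rightarrow> nat"

text \<open>Two permutations with the same history order their values the same way: by induction on
  \<open>t\<close>, each value has as many descents crossing \<open>t + 1/2\<close> to its left in both.\<close>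

locale same_fv_history = two_interval_perms +
  assumes same_history: "fv_history n p1 = fv_history n p2"
begin

lemma same_kind: "x \<in> {1..n} \<Longrightarrow> fv_kind p1 x = fv_kind p2 x"
  and same_weight: "x \<in> {1..n} \<Longrightarrow> pat31_2_at n p1 x = pat31_2_at n p2 x"
  using same_history by (simp_all add: fv_history_def history_of_eq_iff)

lemma same_desc:
  assumes "x \<in> {1..n}"
  shows "desc_top p1 x = desc_top p2 x \<and> desc_bottom p1 x = desc_bottom p2 x"
  using same_kind[OF assms] by (auto simp: fv_kind_def split: if_splits)

lemma same_card_crossings_left:
  assumes x: "x \<in> {1..n}" and "x \<le> t" "t < n"
  shows "card (crossings_left n p1 x t) = card (crossings_left n p2 x t)"
  using assms(2,3)
proof (induction t rule: dec_induct)
  case base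
  show ?case
    using p1.card_crossings_left_self[OF x] p2.card_crossings_left_self[OF x] same_weight[OF x] same_desc[OF x]
    by simp
next
  case (step t)
  have st: "Suc t \<in> {1..n}" using step by simp
  have "x < Suc t" using step by simp
  have same_order: "inv p1 (Suc t) < inv p1 x \<longleftrightarrow> inv p2 (Suc t) < inv p2 x"
    using p1.inv_less_iff_card_crossings_left[OF x st \<open>x < Suc t\<close>]
      p2.inv_less_iff_card_crossings_left[OF x st \<open>x < Suc t\<close>] step same_weight[OF st]
    by simp
  show ?case
    using p1.card_crossings_left_Suc[OF x step(1)] p2.card_crossings_left_Suc[OF x step(1)] step
      same_order same_desc[OF st]
    by simp
qed

lemma same_inv_order:
  assumes x: "x \<in> {1..n}" and y: "y \<in> {1..n}"
  shows "inv p1 x < inv p1 y \<longleftrightarrow> inv p2 x < inv p2 y"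
proof -
  have less: "inv p1 y < inv p1 x \<longleftrightarrow> inv p2 y < inv p2 x" if "x \<in> {1..n}" "y \<in> {1..n}" "x < y" for x y
    using p1.inv_less_iff_card_crossings_left[OF that] p2.inv_less_iff_card_crossings_left[OF that]
      same_card_crossings_left[of x "y - 1"] same_weight[of y] that by simp
  consider "x = y" | "x < y" | "y < x" by linarith
  then show ?thesis
  proof cases
    case 2
    then have "inv p1 x \<noteq> inv p1 y" "inv p2 x \<noteq> inv p2 y" by simp_all
    then show ?thesis using less[OF x y 2] by linarith
  qed (use less[OF y x] in simp_all)
qed

end

lemma fv_history_inj_on: "inj_on (fv_history n) (perms n)"
proof (rule inj_onI)
  fix \<sigma>1 \<sigma>2 assume "\<sigma>1 \<in> perms n" "\<sigma>2 \<in> perms n" "fv_history n \<sigma>1 = fv_history n \<sigma>2"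
  then interpret same_fv_history n \<sigma>1 \<sigma>2
    by unfold_locales (simp_all add: perms_def)
  have "inv \<sigma>1 = inv \<sigma>2"
    using permutes_eq_if_same_order[OF permutes_inv permutes_inv] same_inv_order p1.permutes p2.permutes
    by blast
  then show "\<sigma>1 = \<sigma>2"
    by (metis p1.permutes p2.permutes permutes_inv_inv)
qed

section \<open>The Foata-Zeilberger history\<close>

definition fz_kind :: "(nat \<Rightarrow> nat) \<Rightarrow> nat \<Rightarrow> step_kind" where
  "fz_kind \<tau> t = (if \<tau> t < t then if inv \<tau> t < t then Down else Level_des
                   else if inv \<tau> t \<le> t then Level_asc else Up)"

definition cros_at :: "nat \<Rightarrow> (nat \<Rightarrow> nat) \<Rightarrow> nat \<Rightarrow> nat" where
  "cros_at n \<tau> t = card {j \<in> {1..n}. inv \<tau> t < j \<and> j \<le> t \<and> t < \<tau> j}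
                 + card {i \<in> {1..n}. \<tau> i < t \<and> t < i \<and> i < inv \<tau> t}"

definition nest_at :: "nat \<Rightarrow> (nat \<Rightarrow> nat) \<Rightarrow> nat \<Rightarrow> nat" where
  "nest_at n \<tau> t = card {i \<in> {1..n}. i < inv \<tau> t \<and> inv \<tau> t \<le> t \<and> t < \<tau> i}
                 + card {j \<in> {1..n}. \<tau> j < t \<and> t < inv \<tau> t \<and> inv \<tau> t < j}"

definition fz_height :: "nat \<Rightarrow> (nat \<Rightarrow> nat) \<Rightarrow> nat \<Rightarrow> nat" where
  "fz_height n \<tau> t = card {i \<in> {1..n}. i < t \<and> t \<le> \<tau> i}"

definition fz_history :: "nat \<Rightarrow> (nat \<Rightarrow> nat) \<Rightarrow> (step_kind \<times> nat) list" where
  "fz_history n \<tau> = history_of (fz_kind \<tau>) (cros_at n \<tau>) n"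

lemma des_kind_fz_kind [simp]: "des_kind (fz_kind \<tau> t) \<longleftrightarrow> \<tau> t < t"
  by (simp add: des_kind_def fz_kind_def)

context interval_perm
begin

lemma fz_height_eq_card_below:
  "fz_height n p t = card {j \<in> {1..n}. t \<le> j \<and> p j < t}"
proof (cases "t \<le> Suc n")
  case True
  have "card {i \<in> {1..n}. i < t \<and> p i < t} + fz_height n p t = card {i \<in> {1..n}. i < t}"
    using card_filter_add_filter_not[of "{i \<in> {1..n}. i < t}" "\<lambda>i. p i < t"]
    by (simp add: fz_height_def not_less)
  moreover have "card {i \<in> {1..n}. i < t \<and> p i < t} + card {j \<in> {1..n}. t \<le> j \<and> p j < t}
      = card {i \<in> {1..n}. p i < t}"
    using card_filter_add_filter_not[of "{i \<in> {1..n}. p i < t}" "\<lambda>i. i < t"]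
    by (simp add: not_less conj_commute conj_left_commute)
  moreover have "card {i \<in> {1..n}. i < t} = t - 1"
  proof -
    have "{i \<in> {1..n}. i < t} = {1..<t}" using True by auto
    then show ?thesis by simp
  qed
  ultimately show ?thesis using card_less_value[OF True] by linarith
next
  case False
  then have "\<not> t \<le> p i" if "i \<in> {1..n}" for i
    using p_le[of i] that by simp
  then have above: "{i \<in> {1..n}. i < t \<and> t \<le> p i} = {}"
    by blast
  have below: "{j \<in> {1..n}. t \<le> j \<and> p j < t} = {}"
    using False by auto
  show ?thesis unfolding fz_height_def above below by simp
qed

lemma fz_height_eq_if_preimage_le:
  assumes t: "t \<in> {1..n}" and r_le: "inv p t \<le> t"
  shows "fz_height n p t = cros_at n p t + nest_at n p t + of_bool (p t < t)"
proof -
  define r where "r = inv p t"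
  have r: "r \<in> {1..n}" "p r = t" and p_eq_t: "\<And>i. p i = t \<longleftrightarrow> i = r"
    using inv_in[OF t] by (auto simp: r_def p_eq_iff_inv)
  let ?A = "{i \<in> {1..n}. i < t \<and> t \<le> p i}"
  let ?F = "if t < p t then {t} else {}"
  let ?CU = "{j \<in> {1..n}. r < j \<and> j \<le> t \<and> t < p j}"
  let ?NU = "{i \<in> {1..n}. i < r \<and> r \<le> t \<and> t < p i}"
  let ?R = "if r < t then {r} else {}"
  have "i \<in> ?A \<union> ?F \<longleftrightarrow> i \<in> ?CU \<union> ?NU \<union> ?R" for i
  proof (cases "i = r")
    case False
    then have "p i \<noteq> t" using p_eq_t by simp
    then show ?thesis using False r_le t by (auto simp: le_less r_def)
  qed (use r in auto)
  then have "?A \<union> ?F = ?CU \<union> ?NU \<union> ?R" by blast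
  moreover have "card (?A \<union> ?F) = card ?A + card ?F"
    by (rule card_Un_disjoint) auto
  moreover have "card (?CU \<union> ?NU \<union> ?R) = card ?CU + card ?NU + card ?R"
  proof -
    have "?CU \<inter> ?NU = {}" "(?CU \<union> ?NU) \<inter> ?R = {}" by auto
    then show ?thesis by (simp add: card_Un_disjoint)
  qed
  moreover have "cros_at n p t + nest_at n p t = card ?CU + card ?NU"
    using r_le by (auto simp: cros_at_def nest_at_def r_def)
  moreover have "r = t \<Longrightarrow> p t = t" "r < t \<Longrightarrow> p t \<noteq> t" using r p_eq_t by auto
  ultimately show ?thesis
    using r_le by (cases "r = t") (auto simp: fz_height_def r_def)
qed

lemma fz_height_eq_if_preimage_greater:
  assumes t: "t \<in> {1..n}" and r_greater: "t < inv p t"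
  shows "fz_height n p t = cros_at n p t + nest_at n p t + of_bool (p t < t)"
proof -
  define r where "r = inv p t"
  have r: "r \<in> {1..n}" "p r = t" and p_eq_t: "\<And>i. p i = t \<longleftrightarrow> i = r"
    using inv_in[OF t] by (auto simp: r_def p_eq_iff_inv)
  let ?B = "{j \<in> {1..n}. t \<le> j \<and> p j < t}"
  let ?CL = "{i \<in> {1..n}. p i < t \<and> t < i \<and> i < r}"
  let ?NL = "{j \<in> {1..n}. p j < t \<and> t < r \<and> r < j}"
  let ?F = "if p t < t then {t} else {}"
  have "i \<in> ?B \<longleftrightarrow> i \<in> ?CL \<union> ?NL \<union> ?F" for i
  proof (cases "i = r")
    case False
    then have "p i \<noteq> t" using p_eq_t by simp
    then show ?thesis using False r_greater t by (auto simp: le_less r_def)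
  qed (use r in auto)
  then have "?B = ?CL \<union> ?NL \<union> ?F" by blast
  moreover have "card (?CL \<union> ?NL \<union> ?F) = card ?CL + card ?NL + card ?F"
  proof -
    have "?CL \<inter> ?NL = {}" "(?CL \<union> ?NL) \<inter> ?F = {}" by auto
    then show ?thesis by (simp add: card_Un_disjoint)
  qed
  moreover have "cros_at n p t + nest_at n p t = card ?CL + card ?NL"
    using r_greater by (auto simp: cros_at_def nest_at_def r_def)
  ultimately show ?thesis by (simp add: fz_height_eq_card_below)
qed

lemma fz_height_eq:
  "t \<in> {1..n} \<Longrightarrow> fz_height n p t = cros_at n p t + nest_at n p t + of_bool (p t < t)"
  using fz_height_eq_if_preimage_le fz_height_eq_if_preimage_greater by (cases "inv p t \<le> t") auto

lemma fz_height_Suc: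
  assumes t: "t \<in> {1..n}"
  shows "fz_height n p (Suc t) + of_bool (inv p t < t) = fz_height n p t + of_bool (t < p t)"
proof -
  let ?H = "\<lambda>t. {i \<in> {1..n}. i < t \<and> t \<le> p i}"
  have "i \<in> ?H (Suc t) - {t} \<longleftrightarrow> i \<in> ?H t - {inv p t}" for i
  proof (cases "i = inv p t")
    case False
    then have "p i \<noteq> t" by (auto simp: p_eq_iff_inv)
    then show ?thesis using False by auto
  qed simp
  moreover have "inv p t \<in> ?H t \<longleftrightarrow> inv p t < t" and "t \<in> ?H (Suc t) \<longleftrightarrow> t < p t"
    using inv_in[OF t] t by auto
  ultimately show ?thesis
    using card_eq_if_Diff_singleton_eq[of "?H (Suc t)" "?H t" t "inv p t"]
    by (simp add: fz_height_def set_eq_iff)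
qed

lemma fz_height_1: "fz_height n p (Suc 0) = 0"
  by (simp add: fz_height_def)

lemma fz_height_Suc_n: "fz_height n p (Suc n) = 0"
proof -
  have "\<not> Suc n \<le> p i" if "i \<in> {1..n}" for i
    using p_le[of i] that by simp
  then show ?thesis by (simp add: fz_height_def)
qed

lemma fz_history_step:
  assumes t: "t \<in> {1..n}"
  shows "history_step (fz_kind p t) (cros_at n p t) (fz_height n p t) = Some (fz_height n p (Suc t))"
proof -
  have "p t = t \<longleftrightarrow> inv p t = t" by (auto simp: p_eq_iff_inv)
  then show ?thesis
    using fz_height_eq[OF t] fz_height_Suc[OF t]
    by (cases "p t < t") (auto simp: history_step_def fz_kind_def)
qed

lemma fz_history_in_histories: "fz_history n p \<in> histories n 0"
  unfolding fz_history_def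
  by (rule history_of_in_histories[where H = "fz_height n p"])
    (simp_all add: fz_height_1 fz_height_Suc_n fz_history_step)

lemma cros_eq_sum: "cros n p = (\<Sum>t\<in>{1..n}. cros_at n p t)"
proof -
  have "cros n p = card {(i, j). i \<in> {1..n} \<and> j \<in> {1..n} \<and> i < j \<and> j \<le> p i \<and> p i < p j}
      + card {(i, j). i \<in> {1..n} \<and> j \<in> {1..n} \<and> p i < p j \<and> p j < i \<and> i < j}"
    unfolding cros_def by (rule card_pairs_disj) auto
  also have "\<dots> = (\<Sum>t\<in>{1..n}. card {j \<in> {1..n}. inv p t < j \<and> j \<le> t \<and> t < p j})
      + (\<Sum>t\<in>{1..n}. card {i \<in> {1..n}. p i < t \<and> t < i \<and> i < inv p t})"
    using card_pairs_eq_sum_inv_fst[of "\<lambda>i j. i < j \<and> j \<le> p i \<and> p i < p j"]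
      card_pairs_eq_sum_inv_snd[of "\<lambda>i j. p i < p j \<and> p j < i \<and> i < j"]
    by simp
  finally show ?thesis by (simp add: cros_at_def sum.distrib)
qed

lemma nest_eq_sum: "nest n p = (\<Sum>t\<in>{1..n}. nest_at n p t)"
proof -
  have "nest n p = card {(i, j). i \<in> {1..n} \<and> j \<in> {1..n} \<and> i < j \<and> j \<le> p j \<and> p j < p i}
      + card {(i, j). i \<in> {1..n} \<and> j \<in> {1..n} \<and> p j < p i \<and> p i < i \<and> i < j}"
    unfolding nest_def by (rule card_pairs_disj) auto
  also have "\<dots> = (\<Sum>t\<in>{1..n}. card {i \<in> {1..n}. i < inv p t \<and> inv p t \<le> t \<and> t < p i})
      + (\<Sum>t\<in>{1..n}. card {j \<in> {1..n}. p j < t \<and> t < inv p t \<and> inv p t < j})"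
    using card_pairs_eq_sum_inv_snd[of "\<lambda>i j. i < j \<and> j \<le> p j \<and> p j < p i"]
      card_pairs_eq_sum_inv_fst[of "\<lambda>i j. p j < p i \<and> p i < i \<and> i < j"]
    by simp
  finally show ?thesis by (simp add: nest_at_def sum.distrib)
qed

lemma sum_fz_height: "(\<Sum>t\<in>{1..n}. fz_height n p t) = (\<Sum>i\<in>{1..n}. p i - i)"
proof -
  have "(\<Sum>t\<in>{1..n}. fz_height n p t) = card {(i, t). i \<in> {1..n} \<and> t \<in> {1..n} \<and> i < t \<and> t \<le> p i}"
    using card_pairs_eq_sum_snd[of "{1..n}" "\<lambda>i t. i < t \<and> t \<le> p i"] by (simp add: fz_height_def)
  also have "\<dots> = (\<Sum>i\<in>{1..n}. card {t \<in> {1..n}. i < t \<and> t \<le> p i})"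
    using card_pairs_eq_sum_fst[of "{1..n}" "\<lambda>i t. i < t \<and> t \<le> p i"] by simp
  also have "\<dots> = (\<Sum>i\<in>{1..n}. p i - i)"
  proof (rule sum.cong)
    fix i assume "i \<in> {1..n}"
    then have "{t \<in> {1..n}. i < t \<and> t \<le> p i} = {i<..p i}" using p_in[of i] by auto
    then show "card {t \<in> {1..n}. i < t \<and> t \<le> p i} = p i - i" by simp
  qed simp
  finally show ?thesis .
qed

lemma card_inversions_right:
  assumes i: "i \<in> {1..n}" and "i \<le> p i"
  shows "card {j \<in> {1..n}. i < j \<and> p j < p i} = (p i - i) + card {j \<in> {1..n}. j < i \<and> p i < p j}"
proof -
  let ?LL = "{j \<in> {1..n}. j < i \<and> p j < p i}"
  let ?RL = "{j \<in> {1..n}. i < j \<and> p j < p i}"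
  let ?LR = "{j \<in> {1..n}. j < i \<and> p i < p j}"
  have "j < i \<or> i < j" if "p j < p i" for j
    using that by (cases j i rule: linorder_cases) auto
  then have "{j \<in> {1..n}. p j < p i} = ?LL \<union> ?RL" by blast
  then have "card ?LL + card ?RL = card {j \<in> {1..n}. p j < p i}"
    by (simp add: card_Un_disjoint[symmetric] disjoint_iff)
  moreover have "p j < p i \<or> p i < p j" if "j < i" for j
    using that by (cases "p j" "p i" rule: linorder_cases) auto
  then have "{j \<in> {1..n}. j < i} = ?LL \<union> ?LR" by blast
  then have "card ?LL + card ?LR = card {j \<in> {1..n}. j < i}"
    by (simp add: card_Un_disjoint[symmetric] disjoint_iff)
  moreover have "card {j \<in> {1..n}. p j < p i} = p i - 1"
    using card_less_value[of "p i"] p_in[OF i] by simp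
  moreover have "card {j \<in> {1..n}. j < i} = i - 1"
  proof -
    have "{j \<in> {1..n}. j < i} = {1..<i}" using i by auto
    then show ?thesis by simp
  qed
  moreover have "1 \<le> i" using i by simp
  ultimately show ?thesis using \<open>i \<le> p i\<close> by linarith
qed

lemma invc_eq_nest_add:
  "invc n p = nest n p + card {(i, j). i \<in> {1..n} \<and> j \<in> {1..n} \<and> i < j \<and> i \<le> p i \<and> p j < j \<and> p j < p i}"
proof -
  have "invc n p = card {(i, j). i \<in> {1..n} \<and> j \<in> {1..n} \<and>
      (((i < j \<and> j \<le> p j \<and> p j < p i) \<or> (p j < p i \<and> p i < i \<and> i < j))
       \<or> (i < j \<and> i \<le> p i \<and> p j < j \<and> p j < p i))}"
    unfolding invc_def by (rule arg_cong[where f = card]) auto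
  also have "\<dots> = nest n p + card {(i, j). i \<in> {1..n} \<and> j \<in> {1..n} \<and> i < j \<and> i \<le> p i \<and> p j < j \<and> p j < p i}"
    unfolding nest_def by (rule card_pairs_disj) auto
  finally show ?thesis .
qed

lemma card_excedance_inversions:
  "card {(i, j). i \<in> {1..n} \<and> j \<in> {1..n} \<and> i < j \<and> i \<le> p i \<and> p j < j \<and> p j < p i}
   = (\<Sum>i\<in>{1..n}. p i - i)"
proof -
  define X where "X i = card {j \<in> {1..n}. i < j \<and> i \<le> p i \<and> p j < j \<and> p j < p i}" for i
  define W where "W i = card {j \<in> {1..n}. i < j \<and> i \<le> p i \<and> j \<le> p j \<and> p j < p i}" for i
  define B where "B i = card {j \<in> {1..n}. j < i \<and> i \<le> p i \<and> p i < p j}" for i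
  have split: "X i + W i = (p i - i) + B i" if i: "i \<in> {1..n}" for i
  proof (cases "i \<le> p i")
    case True
    let ?X = "{j \<in> {1..n}. i < j \<and> i \<le> p i \<and> p j < j \<and> p j < p i}"
    let ?W = "{j \<in> {1..n}. i < j \<and> i \<le> p i \<and> j \<le> p j \<and> p j < p i}"
    have "{j \<in> {1..n}. i < j \<and> p j < p i} = ?X \<union> ?W"
      using True by auto
    moreover have "card (?X \<union> ?W) = card ?X + card ?W"
      by (rule card_Un_disjoint) auto
    ultimately have "card {j \<in> {1..n}. i < j \<and> p j < p i} = X i + W i"
      by (simp add: X_def W_def)
    then show ?thesis
      using card_inversions_right[OF i True] True by (simp add: B_def)
  qed (simp add: X_def W_def B_def)
  \<comment> \<open>Both sums count the pairs \<open>i < j\<close> of weak excedances with \<open>p j < p i\<close>.\<close>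
  have "(\<Sum>i\<in>{1..n}. W i) = (\<Sum>i\<in>{1..n}. B i)"
  proof -
    let ?S = "{(i, j). i \<in> {1..n} \<and> j \<in> {1..n} \<and> i < j \<and> i \<le> p i \<and> j \<le> p j \<and> p j < p i}"
    have "card ?S = (\<Sum>i\<in>{1..n}. W i)"
      unfolding W_def by (rule card_pairs_eq_sum_fst) simp
    moreover have "card ?S = (\<Sum>j\<in>{1..n}. B j)"
      unfolding B_def by (subst card_pairs_eq_sum_snd) (auto intro!: sum.cong arg_cong[where f = card])
    ultimately show ?thesis by simp
  qed
  moreover have "(\<Sum>i\<in>{1..n}. X i) + (\<Sum>i\<in>{1..n}. W i) = (\<Sum>i\<in>{1..n}. p i - i) + (\<Sum>i\<in>{1..n}. B i)"
    using split by (simp add: sum.distrib[symmetric])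
  moreover have "card {(i, j). i \<in> {1..n} \<and> j \<in> {1..n} \<and> i < j \<and> i \<le> p i \<and> p j < j \<and> p j < p i}
      = (\<Sum>i\<in>{1..n}. X i)"
    unfolding X_def by (rule card_pairs_eq_sum_fst) simp
  ultimately show ?thesis by simp
qed

lemma invc_eq_sum: "invc n p = (\<Sum>t\<in>{1..n}. fz_height n p t) + nest n p"
  using invc_eq_nest_add card_excedance_inversions sum_fz_height by simp

lemma fz_fixed_point_iff:
  assumes t: "t \<in> {1..n}"
  shows "fz_kind p t = Level_asc \<and> cros_at n p t = 0 \<longleftrightarrow> p t = t"
proof
  assume asc: "fz_kind p t = Level_asc \<and> cros_at n p t = 0"
  show "p t = t"
  proof (rule ccontr)
    assume "p t \<noteq> t"
    then have "inv p t \<noteq> t" by (auto simp: p_eq_iff_inv)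
    then have "t < p t" "inv p t < t" using asc \<open>p t \<noteq> t\<close> by (auto simp: fz_kind_def split: if_splits)
    then have "t \<in> {j \<in> {1..n}. inv p t < j \<and> j \<le> t \<and> t < p j}" using t by simp
    then show False using asc by (auto simp: cros_at_def)
  qed
next
  assume "p t = t"
  then have "inv p t = t" by (auto simp: p_eq_iff_inv)
  then show "fz_kind p t = Level_asc \<and> cros_at n p t = 0"
    using \<open>p t = t\<close> by (simp add: fz_kind_def cros_at_def)
qed

lemma fz_history_stats:
  "hist_stats (fz_history n p) = (wex n p, fixcount n p, cros n p, nest n p, invc n p)"
proof -
  let ?D = "card {t \<in> {1..n}. p t < t}"
  have "wex n p + ?D = n"
    using card_filter_add_filter_not[of "{1..n}" "\<lambda>t. t \<le> p t"] by (simp add: wex_def not_le)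
  then have wex: "wex n p = n - ?D" by simp
  have slack: "(\<Sum>t=1..n. fz_height n p t - cros_at n p t - of_bool (p t < t)) = nest n p"
    unfolding nest_eq_sum by (intro sum.cong) (simp_all add: fz_height_eq)
  have "(\<Sum>t\<in>{1..n}. fz_height n p t) = ?D + cros n p + nest n p"
    by (simp add: fz_height_eq sum.distrib cros_eq_sum nest_eq_sum Int_def)
  then have invc: "invc n p = ?D + cros n p + 2 * nest n p"
    by (simp add: invc_eq_sum)
  have fixcount: "fixcount n p = card {t \<in> {1..n}. fz_kind p t = Level_asc \<and> cros_at n p t = 0}"
    unfolding fixcount_def using fz_fixed_point_iff by (intro arg_cong[where f = card]) blast
  show ?thesis
    unfolding wex invc fixcount slack[symmetric] fz_history_def
    by (rule hist_stats_history_of[where H = "fz_height n p"])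
      (simp_all add: fz_height_1 fz_history_step cros_eq_sum)
qed

end

section \<open>Injectivity of the Foata-Zeilberger history\<close>

text \<open>After reading the positions \<open>1..t\<close> of \<open>\<tau>\<close> one knows the arcs \<open>i \<mapsto> \<tau> i\<close> that are
  still open or already closed, and the values not yet reached together with the order of
  their preimages.  This state is determined step by step by the history.\<close>

definition open_arcs :: "nat \<Rightarrow> (nat \<Rightarrow> nat) \<Rightarrow> nat \<Rightarrow> nat set" where
  "open_arcs n \<tau> t = {i \<in> {1..n}. i \<le> t \<and> t < \<tau> i}"

definition pending_values :: "nat \<Rightarrow> (nat \<Rightarrow> nat) \<Rightarrow> nat \<Rightarrow> nat set" where
  "pending_values n \<tau> t = {a \<in> {1..n}. a \<le> t \<and> t < inv \<tau> a}"

definition pending_order :: "nat \<Rightarrow> (nat \<Rightarrow> nat) \<Rightarrow> nat \<Rightarrow> (nat \<times> nat) set" where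
  "pending_order n \<tau> t =
     {(a, b). a \<in> pending_values n \<tau> t \<and> b \<in> pending_values n \<tau> t \<and> inv \<tau> a < inv \<tau> b}"

definition closed_arcs :: "nat \<Rightarrow> (nat \<Rightarrow> nat) \<Rightarrow> nat \<Rightarrow> (nat \<times> nat) set" where
  "closed_arcs n \<tau> t = {(i, j). i \<in> {1..n} \<and> i \<le> t \<and> j \<le> t \<and> \<tau> i = j}"

definition fz_state :: "nat \<Rightarrow> (nat \<Rightarrow> nat) \<Rightarrow> nat \<Rightarrow> nat set \<times> nat set \<times> (nat \<times> nat) set \<times> (nat \<times> nat) set" where
  "fz_state n \<tau> t = (open_arcs n \<tau> t, pending_values n \<tau> t, pending_order n \<tau> t, closed_arcs n \<tau> t)"

lemma fz_state_0: "fz_state n \<tau> 0 = ({}, {}, {}, {})"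
  by (auto simp: fz_state_def open_arcs_def pending_values_def pending_order_def closed_arcs_def)

context interval_perm
begin

lemma inv_less_iff_fz_kind:
  assumes "s \<in> {1..n}"
  shows "inv p s < s \<longleftrightarrow> fz_kind p s = Down \<or> (fz_kind p s = Level_asc \<and> cros_at n p s \<noteq> 0)"
proof -
  have "inv p s = s \<longleftrightarrow> p s = s" by (auto simp: p_eq_iff_inv)
  then show ?thesis
    using fz_fixed_point_iff[OF assms] by (auto simp: fz_kind_def split: if_splits)
qed

lemma open_arcs_Suc:
  "open_arcs n p (Suc t) = {i \<in> open_arcs n p t. p i \<noteq> Suc t}
     \<union> (if Suc t < p (Suc t) \<and> Suc t \<le> n then {Suc t} else {})"
  by (auto simp: open_arcs_def le_Suc_eq)

lemma pending_values_Suc: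
  assumes "t < n"
  shows "pending_values n p (Suc t) = {a \<in> pending_values n p t. a \<noteq> p (Suc t)}
     \<union> (if Suc t < inv p (Suc t) then {Suc t} else {})"
proof -
  have "a \<in> pending_values n p (Suc t) \<longleftrightarrow>
      a \<in> {a \<in> pending_values n p t. a \<noteq> p (Suc t)} \<union> (if Suc t < inv p (Suc t) then {Suc t} else {})" for a
  proof (cases "a = p (Suc t)")
    case False
    then have "inv p a \<noteq> Suc t" by (auto simp: inv_eq_iff_p)
    then show ?thesis using False assms by (auto simp: pending_values_def le_Suc_eq)
  qed (auto simp: pending_values_def p_eq_iff_inv)
  then show ?thesis by blast
qed

lemma closed_arcs_Suc:
  assumes "t < n"
  shows "closed_arcs n p (Suc t) = closed_arcs n p t
     \<union> (if inv p (Suc t) \<le> Suc t then {(inv p (Suc t), Suc t)} else {})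
     \<union> (if p (Suc t) \<le> Suc t then {(Suc t, p (Suc t))} else {})"
proof -
  have "inv p (Suc t) \<in> {1..n}" using assms by (intro inv_in) simp
  then show ?thesis
    using assms by (auto simp: closed_arcs_def le_Suc_eq p_eq_iff_inv inv_eq_iff_p)
qed

lemma closed_arcs_n: "closed_arcs n p n = {(i, j). i \<in> {1..n} \<and> p i = j}"
  using p_in by (auto simp: closed_arcs_def)

lemma cros_at_Suc_preimage_left:
  assumes "t < n" and r: "inv p (Suc t) < Suc t"
  shows "inv p (Suc t) \<in> open_arcs n p t"
    and "cros_at n p (Suc t) = card {j \<in> open_arcs n p t. inv p (Suc t) < j} + of_bool (Suc t < p (Suc t))"
proof -
  let ?s = "Suc t" and ?r = "inv p (Suc t)"
  have "?r \<in> {1..n}" using assms by (intro inv_in) simp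
  then show "?r \<in> open_arcs n p t" using r by (simp add: open_arcs_def)
  have "j \<in> {j \<in> {1..n}. ?r < j \<and> j \<le> ?s \<and> ?s < p j} \<longleftrightarrow>
      j \<in> {j \<in> open_arcs n p t. ?r < j} \<union> (if ?s < p ?s then {?s} else {})" for j
  proof (cases "j = ?r")
    case False
    then have "p j \<noteq> ?s" by (auto simp: p_eq_iff_inv)
    then show ?thesis using False \<open>t < n\<close> r by (auto simp: open_arcs_def le_Suc_eq)
  qed (use r in simp)
  then have "{j \<in> {1..n}. ?r < j \<and> j \<le> ?s \<and> ?s < p j}
      = {j \<in> open_arcs n p t. ?r < j} \<union> (if ?s < p ?s then {?s} else {})"
    by blast
  moreover have "card ({j \<in> open_arcs n p t. ?r < j} \<union> (if ?s < p ?s then {?s} else {}))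
      = card {j \<in> open_arcs n p t. ?r < j} + of_bool (?s < p ?s)"
    by (simp add: open_arcs_def)
  moreover have "{i \<in> {1..n}. p i < ?s \<and> ?s < i \<and> i < ?r} = {}" using r by auto
  ultimately show "cros_at n p ?s = card {j \<in> open_arcs n p t. ?r < j} + of_bool (?s < p ?s)"
    by (simp add: cros_at_def)
qed

lemma open_arcs_keep:
  "Suc t \<le> inv p (Suc t) \<Longrightarrow> {i \<in> open_arcs n p t. p i \<noteq> Suc t} = open_arcs n p t"
  by (auto simp: open_arcs_def p_eq_iff_inv)

lemma image_first_pending:
  assumes "t < n" and "p (Suc t) < Suc t"
  shows "p (Suc t) \<in> pending_values n p t"
    and "\<forall>b \<in> pending_values n p t. (b, p (Suc t)) \<notin> pending_order n p t"
proof -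
  have "p (Suc t) \<in> {1..n}" using assms by (intro p_in) simp
  then show "p (Suc t) \<in> pending_values n p t" using assms by (simp add: pending_values_def)
  show "\<forall>b \<in> pending_values n p t. (b, p (Suc t)) \<notin> pending_order n p t"
    by (auto simp: pending_order_def pending_values_def)
qed

lemma pending_values_keep:
  "Suc t \<le> p (Suc t) \<Longrightarrow> {a \<in> pending_values n p t. a \<noteq> p (Suc t)} = pending_values n p t"
  by (auto simp: pending_values_def)

lemma pending_order_Suc:
  assumes "t < n"
    and "a \<in> pending_values n p (Suc t) - {Suc t}" and "b \<in> pending_values n p (Suc t) - {Suc t}"
  shows "(a, b) \<in> pending_order n p (Suc t) \<longleftrightarrow> (a, b) \<in> pending_order n p t"
  using assms pending_values_Suc[OF assms(1)] by (auto simp: pending_order_def split: if_splits)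

lemma cros_at_Suc_preimage_right:
  assumes r: "Suc t < inv p (Suc t)"
  shows "cros_at n p (Suc t) = card {b \<in> pending_values n p (Suc t) - {Suc t}. inv p b < inv p (Suc t)}"
proof -
  let ?s = "Suc t" and ?r = "inv p (Suc t)"
  have "{j \<in> {1..n}. ?r < j \<and> j \<le> ?s \<and> ?s < p j} = {}" using r by auto
  moreover have "card {i \<in> {1..n}. p i < ?s \<and> ?s < i \<and> i < ?r}
      = card {b \<in> {1..n}. b < ?s \<and> ?s < inv p b \<and> inv p b < ?r}"
    using card_reindex_inv[of "\<lambda>i. p i < ?s \<and> ?s < i \<and> i < ?r"] by simp
  moreover have "{b \<in> {1..n}. b < ?s \<and> ?s < inv p b \<and> inv p b < ?r}
      = {b \<in> pending_values n p (Suc t) - {Suc t}. inv p b < ?r}"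
    by (auto simp: pending_values_def)
  ultimately show ?thesis by (simp add: cros_at_def)
qed

lemma pending_order_Suc_new_value:
  assumes "t < n" and r: "Suc t < inv p (Suc t)" and a: "a \<in> pending_values n p (Suc t) - {Suc t}"
  shows "(a, Suc t) \<in> pending_order n p (Suc t) \<longleftrightarrow>
      card {b \<in> pending_values n p (Suc t) - {Suc t}. (b, a) \<in> pending_order n p t} < cros_at n p (Suc t)"
    and "(Suc t, a) \<in> pending_order n p (Suc t) \<longleftrightarrow> (a, Suc t) \<notin> pending_order n p (Suc t)"
proof -
  let ?V = "pending_values n p (Suc t) - {Suc t}"
  have s: "Suc t \<in> pending_values n p (Suc t)"
    using assms by (simp add: pending_values_def)
  have "inv p a \<noteq> inv p (Suc t)" using a by auto
  then have "inv p a < inv p (Suc t) \<longleftrightarrow>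
      card {b \<in> ?V. inv p b < inv p a} < card {b \<in> ?V. inv p b < inv p (Suc t)}"
    by (intro less_iff_card_filter_less) (use a in \<open>simp_all add: pending_values_def\<close>)
  moreover have "{b \<in> ?V. (b, a) \<in> pending_order n p t} = {b \<in> ?V. (b, a) \<in> pending_order n p (Suc t)}"
    using pending_order_Suc[OF \<open>t < n\<close> _ a] by blast
  then have "{b \<in> ?V. inv p b < inv p a} = {b \<in> ?V. (b, a) \<in> pending_order n p t}"
    using a by (auto simp: pending_order_def)
  ultimately show "(a, Suc t) \<in> pending_order n p (Suc t) \<longleftrightarrow>
      card {b \<in> ?V. (b, a) \<in> pending_order n p t} < cros_at n p (Suc t)"
    using s a cros_at_Suc_preimage_right[OF r] by (simp add: pending_order_def)
  have "inv p a < inv p (Suc t) \<or> inv p (Suc t) < inv p a"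
    using \<open>inv p a \<noteq> inv p (Suc t)\<close> by linarith
  then show "(Suc t, a) \<in> pending_order n p (Suc t) \<longleftrightarrow> (a, Suc t) \<notin> pending_order n p (Suc t)"
    using s a by (auto simp: pending_order_def)
qed

end

locale same_fz_history = two_interval_perms +
  assumes same_history: "fz_history n p1 = fz_history n p2"
begin

lemma same_kind: "s \<in> {1..n} \<Longrightarrow> fz_kind p1 s = fz_kind p2 s"
  and same_cros_at: "s \<in> {1..n} \<Longrightarrow> cros_at n p1 s = cros_at n p2 s"
  using same_history by (simp_all add: fz_history_def history_of_eq_iff)

lemma same_image_side:
  assumes "s \<in> {1..n}"
  shows "p1 s < s \<longleftrightarrow> p2 s < s" and "p1 s = s \<longleftrightarrow> p2 s = s" and "s < p1 s \<longleftrightarrow> s < p2 s"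
proof -
  show less: "p1 s < s \<longleftrightarrow> p2 s < s"
    using arg_cong[OF same_kind[OF assms], of des_kind] by simp
  show eq: "p1 s = s \<longleftrightarrow> p2 s = s"
    using p1.fz_fixed_point_iff[OF assms] p2.fz_fixed_point_iff[OF assms] same_kind[OF assms]
      same_cros_at[OF assms] by simp
  show "s < p1 s \<longleftrightarrow> s < p2 s"
    using less eq by linarith
qed

lemma same_preimage_side:
  assumes "s \<in> {1..n}"
  shows "inv p1 s < s \<longleftrightarrow> inv p2 s < s" and "inv p1 s = s \<longleftrightarrow> inv p2 s = s"
    and "s < inv p1 s \<longleftrightarrow> s < inv p2 s"
proof -
  show less: "inv p1 s < s \<longleftrightarrow> inv p2 s < s"
    using p1.inv_less_iff_fz_kind[OF assms] p2.inv_less_iff_fz_kind[OF assms] same_kind[OF assms]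
      same_cros_at[OF assms] by simp
  show eq: "inv p1 s = s \<longleftrightarrow> inv p2 s = s"
    using same_image_side(2)[OF assms] by (auto simp: p1.inv_eq_iff_p p2.inv_eq_iff_p)
  show "s < inv p1 s \<longleftrightarrow> s < inv p2 s"
    using less eq by linarith
qed

end

locale same_fz_state = same_fz_history +
  fixes t :: nat
  assumes t_less_n: "t < n"
    and same_state: "fz_state n p1 t = fz_state n p2 t"
begin

lemma Suc_t_in: "Suc t \<in> {1..n}"
  using t_less_n by simp

lemma same_open_arcs: "open_arcs n p1 t = open_arcs n p2 t"
  and same_pending_values: "pending_values n p1 t = pending_values n p2 t"
  and same_pending_order: "pending_order n p1 t = pending_order n p2 t"
  and same_closed_arcs: "closed_arcs n p1 t = closed_arcs n p2 t"
  using same_state by (simp_all add: fz_state_def)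

lemma same_preimage:
  assumes "inv p1 (Suc t) < Suc t"
  shows "inv p1 (Suc t) = inv p2 (Suc t)"
proof -
  have "inv p2 (Suc t) < Suc t" using assms same_preimage_side(1)[OF Suc_t_in] by simp
  note left1 = p1.cros_at_Suc_preimage_left[OF t_less_n assms]
    and left2 = p2.cros_at_Suc_preimage_left[OF t_less_n this]
  \<comment> \<open>The preimage of \<open>t + 1\<close> is recovered from its rank among the open arcs.\<close>
  have same_rank: "card {j \<in> open_arcs n p1 t. inv p1 (Suc t) < j} = card {j \<in> open_arcs n p1 t. inv p2 (Suc t) < j}"
    using left1(2) left2(2) same_cros_at[OF Suc_t_in] same_image_side(3)[OF Suc_t_in] same_open_arcs
    by simp
  have "inj_on (\<lambda>i. card {j \<in> open_arcs n p1 t. i < j}) (open_arcs n p1 t)"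
    by (rule inj_on_card_greater) (simp add: open_arcs_def)
  from inj_onD[OF this, of "inv p1 (Suc t)" "inv p2 (Suc t)"] show ?thesis
    using same_rank left1(1) left2(1) same_open_arcs by simp
qed

lemma same_image:
  assumes "p1 (Suc t) < Suc t"
  shows "p1 (Suc t) = p2 (Suc t)"
proof (rule ccontr)
  assume ne: "p1 (Suc t) \<noteq> p2 (Suc t)"
  have "p2 (Suc t) < Suc t" using assms same_image_side(1)[OF Suc_t_in] by simp
  note first1 = p1.image_first_pending[OF t_less_n assms]
    and first2 = p2.image_first_pending[OF t_less_n this]
  \<comment> \<open>Both images are the first pending value, and the pending order is total.\<close>
  have "inv p1 (p1 (Suc t)) \<noteq> inv p1 (p2 (Suc t))" using ne p1.inv_eq_iff by blast
  then have "(p1 (Suc t), p2 (Suc t)) \<in> pending_order n p1 t \<or> (p2 (Suc t), p1 (Suc t)) \<in> pending_order n p1 t"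
    using first1(1) first2(1) same_pending_values by (auto simp: pending_order_def)
  then show False
    using first1 first2 same_pending_values same_pending_order by auto
qed

lemma same_open_arcs_Suc: "open_arcs n p1 (Suc t) = open_arcs n p2 (Suc t)"
proof -
  have "{i \<in> open_arcs n p1 t. p1 i \<noteq> Suc t} = {i \<in> open_arcs n p2 t. p2 i \<noteq> Suc t}"
  proof (cases "inv p1 (Suc t) < Suc t")
    case True
    then show ?thesis
      using same_preimage same_open_arcs by (auto simp: p1.p_eq_iff_inv p2.p_eq_iff_inv)
  next
    case False
    then have "Suc t \<le> inv p1 (Suc t)" "Suc t \<le> inv p2 (Suc t)"
      using same_preimage_side(1)[OF Suc_t_in] by simp_all
    note keep = p1.open_arcs_keep[OF this(1)] p2.open_arcs_keep[OF this(2)]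
    show ?thesis unfolding keep by (rule same_open_arcs)
  qed
  then show ?thesis
    using p1.open_arcs_Suc p2.open_arcs_Suc same_image_side(3)[OF Suc_t_in] by simp
qed

lemma same_pending_values_Suc: "pending_values n p1 (Suc t) = pending_values n p2 (Suc t)"
proof -
  have "{a \<in> pending_values n p1 t. a \<noteq> p1 (Suc t)} = {a \<in> pending_values n p2 t. a \<noteq> p2 (Suc t)}"
  proof (cases "p1 (Suc t) < Suc t")
    case True
    then show ?thesis using same_image same_pending_values by simp
  next
    case False
    then have "Suc t \<le> p1 (Suc t)" "Suc t \<le> p2 (Suc t)"
      using same_image_side(1)[OF Suc_t_in] by simp_all
    note keep = p1.pending_values_keep[OF this(1)] p2.pending_values_keep[OF this(2)]
    show ?thesis unfolding keep by (rule same_pending_values)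
  qed
  then show ?thesis
    using p1.pending_values_Suc[OF t_less_n] p2.pending_values_Suc[OF t_less_n]
      same_preimage_side(3)[OF Suc_t_in] by simp
qed

lemma same_closed_arcs_Suc: "closed_arcs n p1 (Suc t) = closed_arcs n p2 (Suc t)"
proof -
  have "(if inv p1 (Suc t) \<le> Suc t then {(inv p1 (Suc t), Suc t)} else {})
      = (if inv p2 (Suc t) \<le> Suc t then {(inv p2 (Suc t), Suc t)} else {})"
    using same_preimage same_preimage_side[OF Suc_t_in] by (auto simp: le_less)
  moreover have "(if p1 (Suc t) \<le> Suc t then {(Suc t, p1 (Suc t))} else {})
      = (if p2 (Suc t) \<le> Suc t then {(Suc t, p2 (Suc t))} else {})"
    using same_image same_image_side[OF Suc_t_in] by (auto simp: le_less)
  ultimately show ?thesis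
    using p1.closed_arcs_Suc[OF t_less_n] p2.closed_arcs_Suc[OF t_less_n] same_closed_arcs by simp
qed

lemma same_pending_order_new_value:
  assumes "Suc t \<in> pending_values n p1 (Suc t)" and c: "c \<in> pending_values n p1 (Suc t) - {Suc t}"
  shows "(c, Suc t) \<in> pending_order n p1 (Suc t) \<longleftrightarrow> (c, Suc t) \<in> pending_order n p2 (Suc t)"
    and "(Suc t, c) \<in> pending_order n p1 (Suc t) \<longleftrightarrow> (Suc t, c) \<in> pending_order n p2 (Suc t)"
proof -
  have "Suc t < inv p1 (Suc t)"
    using assms(1) by (simp add: pending_values_def)
  moreover from this have "Suc t < inv p2 (Suc t)"
    using same_preimage_side(3)[OF Suc_t_in] by simp
  moreover have c2: "c \<in> pending_values n p2 (Suc t) - {Suc t}"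
    using c same_pending_values_Suc by simp
  ultimately show "(c, Suc t) \<in> pending_order n p1 (Suc t) \<longleftrightarrow> (c, Suc t) \<in> pending_order n p2 (Suc t)"
    and "(Suc t, c) \<in> pending_order n p1 (Suc t) \<longleftrightarrow> (Suc t, c) \<in> pending_order n p2 (Suc t)"
    using p1.pending_order_Suc_new_value[OF t_less_n _ c] p2.pending_order_Suc_new_value[OF t_less_n _ c2]
      same_pending_values_Suc same_pending_order same_cros_at[OF Suc_t_in] by simp_all
qed

lemma same_pending_order_Suc: "pending_order n p1 (Suc t) = pending_order n p2 (Suc t)"
proof -
  let ?V = "pending_values n p1 (Suc t)"
  have "(a, b) \<in> pending_order n p1 (Suc t) \<longleftrightarrow> (a, b) \<in> pending_order n p2 (Suc t)"
    if "a \<in> ?V" "b \<in> ?V" for a b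
  proof -
    consider "a \<noteq> Suc t" "b \<noteq> Suc t" | "a = Suc t" "b = Suc t" | "a \<noteq> Suc t" "b = Suc t"
      | "a = Suc t" "b \<noteq> Suc t" by blast
    then show ?thesis
    proof cases
      case 1
      then show ?thesis
        using p1.pending_order_Suc[OF t_less_n] p2.pending_order_Suc[OF t_less_n] that
          same_pending_values_Suc same_pending_order by simp
    qed (use that same_pending_order_new_value in \<open>simp_all add: pending_order_def\<close>)
  qed
  moreover have "pending_order n p1 (Suc t) \<subseteq> ?V \<times> ?V" "pending_order n p2 (Suc t) \<subseteq> ?V \<times> ?V"
    using same_pending_values_Suc by (auto simp: pending_order_def)
  ultimately show ?thesis by blast
qed

lemma same_fz_state_Suc: "fz_state n p1 (Suc t) = fz_state n p2 (Suc t)"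
  using same_open_arcs_Suc same_pending_values_Suc same_pending_order_Suc same_closed_arcs_Suc
  by (simp add: fz_state_def)

end

context same_fz_history
begin

lemma same_fz_state: "t \<le> n \<Longrightarrow> fz_state n p1 t = fz_state n p2 t"
proof (induction t)
  case 0
  show ?case by (simp add: fz_state_0)
next
  case (Suc t)
  then interpret same_fz_state n p1 p2 t
    by unfold_locales simp_all
  show ?case by (rule same_fz_state_Suc)
qed

lemma same_perm: "p1 = p2"
proof
  fix i
  have "closed_arcs n p1 n = closed_arcs n p2 n"
    using same_fz_state[of n] by (simp add: fz_state_def)
  then have "i \<in> {1..n} \<Longrightarrow> p1 i = p2 i"
    by (auto simp: p1.closed_arcs_n p2.closed_arcs_n)
  then show "p1 i = p2 i"
    using p1.p_outside p2.p_outside by (cases "i \<in> {1..n}") simp_all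
qed

end

lemma fz_history_inj_on: "inj_on (fz_history n) (perms n)"
proof (rule inj_onI)
  fix \<tau>1 \<tau>2 assume "\<tau>1 \<in> perms n" "\<tau>2 \<in> perms n" "fz_history n \<tau>1 = fz_history n \<tau>2"
  then interpret same_fz_history n \<tau>1 \<tau>2
    by unfold_locales (simp_all add: perms_def)
  show "\<tau>1 = \<tau>2" by (rule same_perm)
qed

lemma bij_betw_perms_histories:
  assumes "inj_on f (perms n)" and "\<And>\<sigma>. \<sigma> \<in> perms n \<Longrightarrow> f \<sigma> \<in> histories n 0"
  shows "bij_betw f (perms n) (histories n 0)"
proof -
  have "card (perms n) = fact n"
    unfolding perms_def by (rule card_permutations) simp_all
  then have "card (f ` perms n) = card (histories n 0)"
    using card_image[OF assms(1)] by (simp add: card_histories)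
  then have "f ` perms n = histories n 0"
    using assms(2) by (intro card_subset_eq finite_histories) auto
  then show ?thesis using assms(1) by (simp add: bij_betw_def)
qed

lemma bij_betw_the_inv_into_comp:
  assumes f: "bij_betw f A C" and g: "bij_betw g A C"
  shows "bij_betw (the_inv_into A g \<circ> f) A A"
    and "x \<in> A \<Longrightarrow> g ((the_inv_into A g \<circ> f) x) = f x"
  using bij_betw_trans[OF f bij_betw_the_inv_into[OF g]] f_the_inv_into_f_bij_betw[OF g bij_betw_apply[OF f]]
  by simp_all

lemma interval_perm_if_in_perms: "\<sigma> \<in> perms n \<Longrightarrow> interval_perm n \<sigma>"
  by unfold_locales (simp add: perms_def)

theorem theorem3p1:
  fixes n :: nat
  assumes "n \<ge> 1"
  shows "\<exists>\<Phi>. bij_betw \<Phi> (perms n) (perms n) \<and>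
          (\<forall>\<sigma> \<in> perms n.
             (ndes n \<sigma>, fmax n \<sigma>, pat31_2 n \<sigma>, pat2_31 n \<sigma>, MAD n \<sigma>) =
             (wex n (\<Phi> \<sigma>), fixcount n (\<Phi> \<sigma>), cros n (\<Phi> \<sigma>), nest n (\<Phi> \<sigma>), invc n (\<Phi> \<sigma>)))"
proof -
  have fv: "bij_betw (fv_history n) (perms n) (histories n 0)"
    using fv_history_inj_on interval_perm.fv_history_in_histories[OF interval_perm_if_in_perms]
    by (rule bij_betw_perms_histories)
  have fz: "bij_betw (fz_history n) (perms n) (histories n 0)"
    using fz_history_inj_on interval_perm.fz_history_in_histories[OF interval_perm_if_in_perms]
    by (rule bij_betw_perms_histories)
  let ?\<Phi> = "the_inv_into (perms n) (fz_history n) \<circ> fv_history n"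
  have "(ndes n \<sigma>, fmax n \<sigma>, pat31_2 n \<sigma>, pat2_31 n \<sigma>, MAD n \<sigma>) =
        (wex n (?\<Phi> \<sigma>), fixcount n (?\<Phi> \<sigma>), cros n (?\<Phi> \<sigma>), nest n (?\<Phi> \<sigma>), invc n (?\<Phi> \<sigma>))"
    if "\<sigma> \<in> perms n" for \<sigma>
  proof -
    have "?\<Phi> \<sigma> \<in> perms n"
      using bij_betw_apply[OF bij_betw_the_inv_into_comp(1)[OF fv fz] that] .
    then have "hist_stats (fz_history n (?\<Phi> \<sigma>)) =
        (wex n (?\<Phi> \<sigma>), fixcount n (?\<Phi> \<sigma>), cros n (?\<Phi> \<sigma>), nest n (?\<Phi> \<sigma>), invc n (?\<Phi> \<sigma>))"
      by (rule interval_perm.fz_history_stats[OF interval_perm_if_in_perms])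
    then show ?thesis
      using bij_betw_the_inv_into_comp(2)[OF fv fz that]
        interval_perm.fv_history_stats[OF interval_perm_if_in_perms[OF that]]
      by simp
  qed
  then show ?thesis
    using bij_betw_the_inv_into_comp(1)[OF fv fz] by blast
qed

end
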